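(* Let $\tau(s,t)$ (write $\mathcal F=\log\tau$) and $\phi_0(s,t)$ be functions satisfying, as an identity of formal series in $z_1^{-1},z_2^{-1}$, $$z_1\exp\Bigl(\sum_{n\ge1}\frac1n\frac{\partial\phi_0}{\partial t_n}z_1^{-n}\Bigr)-z_2\exp\Bigl(\sum_{n\ge1}\frac1n\frac{\partial\phi_0}{\partial t_n}z_2^{-n}\Bigr)=(z_1-z_2)\exp\Bigl(\sum_{m,n\ge1}\frac{1}{mn}\frac{\partial^2\mathcal F}{\partial t_m\partial t_n}z_1^{-m}z_2^{-n}\Bigr).$$ Let $\mathsf k(z;s,t):=z\exp\bigl(\sum_{n\ge1}\frac1n\frac{\partial\phi_0}{\partial t_n}z^{-n}\bigr)$, let $\mathcal L(k;s,t)$ be its formal inverse series in $z$, and define the series $\mathcal P(k;s,t)$ by $$\mathcal P(\mathsf k(z;s,t);s,t)=\exp\Bigl(\frac{\partial\phi_0}{\partial s}\Bigr)z^N\exp\Bigl(-\sum_{n\ge1}\frac1n\frac{\partial^2\mathcal F}{\partial s\,\partial t_n}z^{-n}\Bigr).$$ Then $(\mathcal L,\mathcal P)$ satisfies the $N$-dcmKP hierarchy in the generalized sense (with $x$ identified with $t_1$).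
   Context: Fix a positive integer $N$. Variables: $s$ (continuous), $t=(t_1,t_2,\dots)$, with $x$ identified with $t_1$. Poisson bracket $\{f,g\}=\frac{\partial f}{\partial k}\frac{\partial g}{\partial x}-\frac{\partial f}{\partial x}\frac{\partial g}{\partial k}$ (with $\partial_x=\partial_{t_1}$). For $\mathcal L=k+\sum_{n\ge1}u_nk^{1-n}$ and $\mathcal P$, the $N$-dcmKP hierarchy is $\partial_{t_n}\mathcal L=\{\mathcal B_n,\mathcal L\}$ with $\mathcal B_n:=(\mathcal L^n)_{>0}$ (projection onto positive powers of $k$), $\partial_s\mathcal L=\{\log\mathcal P,\mathcal L\}$, $\partial_{t_n}\log\mathcal P=\partial_s\mathcal B_n-\{\log\mathcal P,\mathcal B_n\}$, $n\ge1$. "In the generalized sense" means $\mathcal P$ is allowed to be any formal series $\mathcal P=p_0k^N+\sum_{n\ge1}p_nk^{N-n}$ with $p_0\ne0$ (possibly infinitely many non-positive powers), with $\log\mathcal P:=\log p_0+N\log k+\log(1+\sum_{n\ge1}(p_n/p_0)k^{-n})$ expanded in $k^{-1}$. *)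

theory Defs
  imports "HOL-Analysis.Analysis" "HOL-Computational_Algebra.Formal_Laurent_Series"
begin

unbundle fps_syntax

(* A point of the (s,t)-space is  x :: nat => real  with
       x 0 = s,   x n = t_n  (n >= 1);   x-variable of the hierarchy = t_1 = index 1.
   Coefficient functions are  (nat => real) => real.
   A series in k with finitely many positive powers of k (possibly infinitely
   many negative ones), whose coefficients are functions of (s,t), is modelled
   as  S :: (nat => real) => real fls,  a real Laurent series in the variable
   X = k^{-1} at every point; so the coefficient of k^n is  S x $$ (-n).
   Likewise series in z^{-1} are series in w = z^{-1}.
   ------------------------------------------------------------------------ *)

type_synonym pt = "nat \<Rightarrow> real"

definition pd :: "nat \<Rightarrow> (pt \<Rightarrow> real) \<Rightarrow> pt \<Rightarrow> real" where
  "pd i f x = deriv (\<lambda>h. f (x(i := h))) (x i)"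

definition iter_pd :: "nat list \<Rightarrow> (pt \<Rightarrow> real) \<Rightarrow> pt \<Rightarrow> real" where
  "iter_pd js f = foldr pd js f"

definition smooth :: "(pt \<Rightarrow> real) \<Rightarrow> bool" where
  "smooth f \<longleftrightarrow> (\<forall>js.
     (\<forall>j x. (\<lambda>h. iter_pd js f (x(j := h))) differentiable (at (x j))) \<and>
     (\<forall>x0 I. finite I \<longrightarrow>
        continuous_on UNIV (\<lambda>y::pt. iter_pd js f (\<lambda>i. if i \<in> I then y i else x0 i))))"

definition pdS :: "nat \<Rightarrow> (pt \<Rightarrow> real fls) \<Rightarrow> pt \<Rightarrow> real fls" where
  "pdS i S x = Abs_fls (\<lambda>m. pd i (\<lambda>y. S y $$ m) x)"

text \<open>Derivative d/dk, written in the variable X = k^{-1}.\<close>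
definition kderiv :: "real fls \<Rightarrow> real fls" where
  "kderiv f = Abs_fls (\<lambda>m. of_int (1 - m) * f $$ (m - 1))"

definition pbr :: "(pt \<Rightarrow> real fls) \<Rightarrow> (pt \<Rightarrow> real fls) \<Rightarrow> pt \<Rightarrow> real fls" where
  "pbr F G x = kderiv (F x) * pdS 1 G x - pdS 1 F x * kderiv (G x)"

text \<open>Projection onto strictly positive powers of k (= negative powers of X).\<close>
definition pospart :: "real fls \<Rightarrow> real fls" where
  "pospart f = Abs_fls (\<lambda>m. if m < 0 then f $$ m else 0)"

definition Bn :: "(pt \<Rightarrow> real fls) \<Rightarrow> nat \<Rightarrow> pt \<Rightarrow> real fls" where
  "Bn L n x = pospart (L x ^ n)"

text \<open>log P = log p0 + N log k + log(1 + sum_{n>=1} (p_n/p0) k^{-n}), with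
  p0 = coefficient of k^N.  The constant part log p0 is taken as ln |p0|
  (only its derivatives enter the hierarchy).\<close>
definition logP_const :: "nat \<Rightarrow> (pt \<Rightarrow> real fls) \<Rightarrow> pt \<Rightarrow> real" where
  "logP_const N P x = ln \<bar>P x $$ (- int N)\<bar>"

definition logP_ser :: "nat \<Rightarrow> (pt \<Rightarrow> real fls) \<Rightarrow> pt \<Rightarrow> real fls" where
  "logP_ser N P x = fps_to_fls (fps_ln 1 oo
     (Abs_fps (\<lambda>n. P x $$ (int n - int N) / P x $$ (- int N)) - 1))"

text \<open>d/dk log P = N/k + d/dk(log(1+...)); note 1/k = X.\<close>
definition logP_dk :: "nat \<Rightarrow> (pt \<Rightarrow> real fls) \<Rightarrow> pt \<Rightarrow> real fls" where
  "logP_dk N P x = fls_const (of_nat N) * fls_X + kderiv (logP_ser N P x)"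

definition logP_d :: "nat \<Rightarrow> (pt \<Rightarrow> real fls) \<Rightarrow> nat \<Rightarrow> pt \<Rightarrow> real fls" where
  "logP_d N P i x = fls_const (pd i (logP_const N P) x) + pdS i (logP_ser N P) x"

definition pbr_log :: "nat \<Rightarrow> (pt \<Rightarrow> real fls) \<Rightarrow> (pt \<Rightarrow> real fls) \<Rightarrow> pt \<Rightarrow> real fls" where
  "pbr_log N P G x = logP_dk N P x * pdS 1 G x - logP_d N P 1 x * kderiv (G x)"

definition dcmKP :: "nat \<Rightarrow> (pt \<Rightarrow> real fls) \<Rightarrow> (pt \<Rightarrow> real fls) \<Rightarrow> bool" where
  "dcmKP N L P \<longleftrightarrow>
     \<comment> \<open>L = k + sum_{n>=1} u_n k^{1-n}\<close>
     (\<forall>x. L x $$ (-1) = 1 \<and> (\<forall>m < -1. L x $$ m = 0)) \<and>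
     \<comment> \<open>P = p0 k^N + sum_{n>=1} p_n k^{N-n}, p0 nonzero\<close>
     (\<forall>x. P x $$ (- int N) \<noteq> 0 \<and> (\<forall>m < - int N. P x $$ m = 0)) \<and>
     \<comment> \<open>the coefficients are differentiable in every variable\<close>
     (\<forall>m i x. (\<lambda>h. L (x(i := h)) $$ m) differentiable (at (x i)) \<and>
              (\<lambda>h. P (x(i := h)) $$ m) differentiable (at (x i))) \<and>
     \<comment> \<open>d_{t_n} L = {B_n, L}\<close>
     (\<forall>n\<ge>1. \<forall>x. pdS n L x = pbr (Bn L n) L x) \<and>
     \<comment> \<open>d_s L = {log P, L}\<close>
     (\<forall>x. pdS 0 L x = pbr_log N P L x) \<and>
     \<comment> \<open>d_{t_n} log P = d_s B_n - {log P, B_n}\<close>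
     (\<forall>n\<ge>1. \<forall>x. logP_d N P n x = pdS 0 (Bn L n) x - pbr_log N P (Bn L n) x)"

text \<open>A(w) = sum_{n>=1} (1/n) d_{t_n} phi0 w^n, and E = exp A, so that
  k(z) = z exp(sum (1/n) d_{t_n}phi0 z^{-n}) = w^{-1} E(w), w = z^{-1}.\<close>
definition Aser :: "(pt \<Rightarrow> real) \<Rightarrow> pt \<Rightarrow> real fps" where
  "Aser phi0 x = Abs_fps (\<lambda>n. if n = 0 then 0 else pd n phi0 x / of_nat n)"

definition Eser :: "(pt \<Rightarrow> real) \<Rightarrow> pt \<Rightarrow> real fps" where
  "Eser phi0 x = fps_exp 1 oo Aser phi0 x"

definition kz :: "(pt \<Rightarrow> real) \<Rightarrow> pt \<Rightarrow> real fls" where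
  "kz phi0 x = fls_X_inv * fps_to_fls (Eser phi0 x)"

text \<open>Substituting k = k(z) into a series f in X = k^{-1} means substituting
  X = 1/k(z) = w / E(w), a power series in w with zero constant term.\<close>
definition subst_kz :: "real fls \<Rightarrow> (pt \<Rightarrow> real) \<Rightarrow> pt \<Rightarrow> real fls" where
  "subst_kz f phi0 x = fls_compose_fps f (fls_regpart (inverse (kz phi0 x)))"

definition Hser :: "(pt \<Rightarrow> real) \<Rightarrow> pt \<Rightarrow> real fps" where
  "Hser F x = Abs_fps (\<lambda>n. if n = 0 then 0 else - pd 0 (pd n F) x / of_nat n)"

(* bivariate power series in w1 = z1^{-1}, w2 = z2^{-1}: coefficient arrays *)
definition bmul :: "(nat \<Rightarrow> nat \<Rightarrow> real) \<Rightarrow> (nat \<Rightarrow> nat \<Rightarrow> real) \<Rightarrow> nat \<Rightarrow> nat \<Rightarrow> real" where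
  "bmul f g i j = (\<Sum>a\<le>i. \<Sum>b\<le>j. f a b * g (i - a) (j - b))"

definition bone :: "nat \<Rightarrow> nat \<Rightarrow> real" where
  "bone i j = (if i = 0 \<and> j = 0 then 1 else 0)"

definition bpow :: "(nat \<Rightarrow> nat \<Rightarrow> real) \<Rightarrow> nat \<Rightarrow> nat \<Rightarrow> nat \<Rightarrow> real" where
  "bpow G p = (bmul G ^^ p) bone"

text \<open>exp of a bivariate series G with G 0 0 = 0 (then G^p has total degree >= p).\<close>
definition bexp :: "(nat \<Rightarrow> nat \<Rightarrow> real) \<Rightarrow> nat \<Rightarrow> nat \<Rightarrow> real" where
  "bexp G i j = (\<Sum>p\<le>i + j. bpow G p i j / fact p)"

definition Gbi :: "(pt \<Rightarrow> real) \<Rightarrow> pt \<Rightarrow> nat \<Rightarrow> nat \<Rightarrow> real" where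
  "Gbi F x m n = (if m = 0 \<or> n = 0 then 0
                  else pd m (pd n F) x / (of_nat m * of_nat n))"

definition bcoeff :: "(nat \<Rightarrow> nat \<Rightarrow> real) \<Rightarrow> int \<Rightarrow> int \<Rightarrow> real" where
  "bcoeff X i j = (if 0 \<le> i \<and> 0 \<le> j then X (nat i) (nat j) else 0)"

text \<open>Coefficient of z1^a z2^b in  z1 exp(sum (1/n) phi0_{t_n} z1^{-n}) - (same in z2).\<close>
definition bilin_lhs :: "(pt \<Rightarrow> real) \<Rightarrow> pt \<Rightarrow> int \<Rightarrow> int \<Rightarrow> real" where
  "bilin_lhs phi0 x a b =
     (if b = 0 \<and> a \<le> 1 then Eser phi0 x $ nat (1 - a) else 0)
   - (if a = 0 \<and> b \<le> 1 then Eser phi0 x $ nat (1 - b) else 0)"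

text \<open>Coefficient of z1^a z2^b in (z1 - z2) exp(sum (1/(mn)) F_{t_m t_n} z1^{-m} z2^{-n}).\<close>
definition bilin_rhs :: "(pt \<Rightarrow> real) \<Rightarrow> pt \<Rightarrow> int \<Rightarrow> int \<Rightarrow> real" where
  "bilin_rhs F x a b =
     bcoeff (bexp (Gbi F x)) (1 - a) (- b) - bcoeff (bexp (Gbi F x)) (- a) (1 - b)"

end

theory Submission
  imports Defs
begin

text \<open>Substituting \<open>k = k(z)\<close> is an injective ring homomorphism \<open>f \<mapsto> f(k(z))\<close> of Laurent
  series, so every equation of the hierarchy may be checked after the substitution.
  The bilinear identity says \<open>k(z\<^sub>1) - k(z\<^sub>2) = (z\<^sub>1 - z\<^sub>2) exp (D(z\<^sub>1) D(z\<^sub>2) \<F>)\<close>, with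
  \<open>D(z) = \<Sum>\<^sub>m z\<^sup>-\<^sup>m/m \<partial>\<^sub>t\<^sub>m\<close>; taking logarithms and comparing coefficients yields the Lagrange
  expansion \<open>B\<^sub>n(k(z)) = z\<^sup>n + \<partial>\<^sub>t\<^sub>n\<phi>\<^sub>0 - D(z) \<partial>\<^sub>t\<^sub>n\<F>\<close>, while the definition of \<open>P\<close> gives
  \<open>log P(k(z)) = \<partial>\<^sub>s\<phi>\<^sub>0 + N log z - D(z) \<partial>\<^sub>s\<F>\<close>.
  By the chain rule \<open>\<partial>\<^sub>i (f(k(z))) = (\<partial>\<^sub>i f)(k(z)) + (\<partial>\<^sub>k f)(k(z)) \<partial>\<^sub>i k(z)\<close>, every Poisson bracket
  becomes an expression in the derivatives \<open>\<partial>\<^sub>i B\<^sub>j(k(z)) = \<partial>\<^sub>i\<partial>\<^sub>j\<phi>\<^sub>0 - D(z) \<partial>\<^sub>i\<partial>\<^sub>j\<F>\<close>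
  (with \<open>B\<^sub>0 = log P\<close>, \<open>B\<^sub>1 = k\<close>), and the hierarchy reduces to their symmetry in \<open>i, j\<close>,
  that is, to Schwarz's theorem on mixed partial derivatives.\<close>

no_notation vec_nth (infixl "$" 90)

section \<open>Coefficientwise derivatives of parametrised series\<close>

definition has_fps_deriv :: "(real \<Rightarrow> real fps) \<Rightarrow> real fps \<Rightarrow> real \<Rightarrow> bool" where
  "has_fps_deriv S S' t \<longleftrightarrow> (\<forall>m. ((\<lambda>h. S h $ m) has_real_derivative S' $ m) (at t))"

definition fps_differentiable :: "(real \<Rightarrow> real fps) \<Rightarrow> real \<Rightarrow> bool" where
  "fps_differentiable S t \<longleftrightarrow> (\<forall>m. (\<lambda>h. S h $ m) differentiable (at t))"

lemma has_fps_derivD: "has_fps_deriv S S' t \<Longrightarrow> ((\<lambda>h. S h $ m) has_real_derivative S' $ m) (at t)"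
  by (simp add: has_fps_deriv_def)

lemma has_fps_deriv_const: "has_fps_deriv (\<lambda>h. c) 0 t"
  by (simp add: has_fps_deriv_def)

lemma has_fps_deriv_fps_const:
  "((\<lambda>h. c h) has_real_derivative c') (at t) \<Longrightarrow> has_fps_deriv (\<lambda>h. fps_const (c h)) (fps_const c') t"
  unfolding has_fps_deriv_def by (intro allI, case_tac m) auto

lemma has_fps_deriv_diff:
  "has_fps_deriv S S' t \<Longrightarrow> has_fps_deriv T T' t \<Longrightarrow> has_fps_deriv (\<lambda>h. S h - T h) (S' - T') t"
  by (auto simp: has_fps_deriv_def intro!: derivative_eq_intros)

lemma has_fps_deriv_minus: "has_fps_deriv S S' t \<Longrightarrow> has_fps_deriv (\<lambda>h. - S h) (- S') t"
  by (auto simp: has_fps_deriv_def intro!: derivative_eq_intros)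

lemma has_fps_deriv_unique: "has_fps_deriv S A t \<Longrightarrow> has_fps_deriv S B t \<Longrightarrow> A = B"
  unfolding has_fps_deriv_def fps_eq_iff using DERIV_unique by blast

lemma has_fps_deriv_mult:
  assumes "has_fps_deriv S S' t" "has_fps_deriv T T' t"
  shows "has_fps_deriv (\<lambda>h. S h * T h) (S' * T t + S t * T') t"
  unfolding has_fps_deriv_def
proof
  fix m
  have "((\<lambda>h. \<Sum>i=0..m. S h $ i * T h $ (m - i)) has_real_derivative
        (\<Sum>i=0..m. S' $ i * T t $ (m - i) + S t $ i * T' $ (m - i))) (at t)"
    using assms by (auto simp: has_fps_deriv_def mult.commute intro!: derivative_eq_intros)
  then show "((\<lambda>h. (S h * T h) $ m) has_real_derivative (S' * T t + S t * T') $ m) (at t)"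
    by (simp add: fps_mult_nth sum.distrib)
qed

lemma has_fps_deriv_power:
  assumes "has_fps_deriv S S' t"
  shows "has_fps_deriv (\<lambda>h. S h ^ n) (of_nat n * S t ^ (n - 1) * S') t"
proof (induction n)
  case 0
  then show ?case using has_fps_deriv_const[of 1 t] by simp
next
  case (Suc n)
  have "has_fps_deriv (\<lambda>h. S h * S h ^ n) (S' * S t ^ n + S t * (of_nat n * S t ^ (n - 1) * S')) t"
    by (rule has_fps_deriv_mult[OF assms Suc])
  moreover have "S' * S t ^ n + S t * (of_nat n * S t ^ (n - 1) * S') = of_nat (Suc n) * S t ^ n * S'"
    by (cases n) (simp_all add: algebra_simps)
  ultimately show ?case by simp
qed

lemma has_fps_deriv_nth_0_eq_0:
  assumes "has_fps_deriv S S' t" "\<forall>h. S h $ 0 = 0"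
  shows "S' $ 0 = 0"
  using DERIV_unique[OF has_fps_derivD[OF assms(1)], of 0] assms(2) by simp

lemma fps_compose_mult_nth:
  fixes b g c :: "'a::comm_ring_1 fps"
  assumes g0: "g $ 0 = 0"
  shows "((b oo g) * c) $ m = (\<Sum>j=0..m. b $ j * (g ^ j * c) $ m)"
proof -
  have "((b oo g) * c) $ m = (\<Sum>i=0..m. \<Sum>j=0..i. b $ j * (g ^ j) $ i * c $ (m - i))"
    by (simp add: fps_mult_nth fps_compose_nth sum_distrib_right)
  also have "\<dots> = (\<Sum>i=0..m. \<Sum>j=0..m. b $ j * (g ^ j) $ i * c $ (m - i))"
    by (intro sum.cong refl sum.mono_neutral_left)
       (auto simp: startsby_zero_power_prefix[OF g0])
  also have "\<dots> = (\<Sum>j=0..m. b $ j * (g ^ j * c) $ m)"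
    by (subst sum.swap) (simp add: fps_mult_nth sum_distrib_left mult.assoc)
  finally show ?thesis .
qed

lemma has_fps_deriv_compose:
  assumes a: "has_fps_deriv a a' t" and g: "has_fps_deriv g g' t" and g0: "\<forall>h. g h $ 0 = 0"
  shows "has_fps_deriv (\<lambda>h. a h oo g h) ((a' oo g t) + (fps_deriv (a t) oo g t) * g') t"
  unfolding has_fps_deriv_def
proof
  fix m
  have D: "((\<lambda>h. \<Sum>j=0..m. a h $ j * (g h ^ j) $ m) has_real_derivative
        (\<Sum>j=0..m. a' $ j * (g t ^ j) $ m + a t $ j * (of_nat j * g t ^ (j - 1) * g') $ m)) (at t)"
    using a has_fps_deriv_power[OF g]
    by (auto simp: has_fps_deriv_def mult.commute intro!: derivative_eq_intros)
  have g'0: "g' $ 0 = 0" by (rule has_fps_deriv_nth_0_eq_0[OF g g0])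
  \<comment> \<open>Shift the index of the second sum: its terms \<open>j = 0\<close> and \<open>j = m + 1\<close> vanish.\<close>
  define f where "f j = a t $ j * (of_nat j * g t ^ (j - 1) * g') $ m" for j
  have "f (Suc m) = 0"
  proof -
    have "(g t ^ m) $ i * g' $ (m - i) = 0" if "i \<le> m" for i
      using that g'0 g0 startsby_zero_power_prefix[of "g t" m] by (cases "i = m") auto
    then have "(g t ^ m * g') $ m = 0" by (simp add: fps_mult_nth sum.neutral)
    then show ?thesis by (simp add: f_def mult.assoc flip: fps_of_nat)
  qed
  moreover have "f 0 = 0" by (simp add: f_def)
  moreover have "(\<Sum>j=0..Suc m. f j) = f 0 + (\<Sum>j=0..m. f (Suc j))"
    unfolding sum.atLeast0_atMost_Suc_shift by (simp only: comp_def)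
  ultimately have "(\<Sum>j=0..m. f j) = (\<Sum>j=0..m. f (Suc j))"
    by simp
  also have "\<dots> = (\<Sum>j=0..m. fps_deriv (a t) $ j * (g t ^ j * g') $ m)"
    by (intro sum.cong refl) (simp add: f_def mult.assoc fps_mult_left_const_nth flip: fps_of_nat)
  also have "\<dots> = ((fps_deriv (a t) oo g t) * g') $ m"
    using g0 by (simp add: fps_compose_mult_nth)
  finally have "(\<Sum>j=0..m. f j) = ((fps_deriv (a t) oo g t) * g') $ m" .
  with D show "((\<lambda>h. (a h oo g h) $ m) has_real_derivative
                   ((a' oo g t) + (fps_deriv (a t) oo g t) * g') $ m) (at t)"
    by (simp add: fps_compose_nth sum.distrib f_def)
qed

lemma fps_differentiable_has_fps_deriv:
  "fps_differentiable S t \<Longrightarrow> has_fps_deriv S (Abs_fps (\<lambda>m. deriv (\<lambda>h. S h $ m) t)) t"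
  unfolding fps_differentiable_def has_fps_deriv_def
  using DERIV_deriv_iff_real_differentiable by auto

lemma has_fps_deriv_imp_fps_differentiable: "has_fps_deriv S S' t \<Longrightarrow> fps_differentiable S t"
  unfolding fps_differentiable_def has_fps_deriv_def using real_differentiable_def by blast

lemma fps_differentiable_triangular:
  assumes R: "\<forall>h m. R h $ m = T h $ m + (\<Sum>j<m. a h m j * T h $ j)"
    and a: "\<forall>m j. (\<lambda>h. a h m j) differentiable (at t)"
    and R_diff: "fps_differentiable R t"
  shows "fps_differentiable T t"
  unfolding fps_differentiable_def
proof
  fix m show "(\<lambda>h. T h $ m) differentiable (at t)"
  proof (induction m rule: less_induct)
    case (less m)
    have "(\<lambda>h. T h $ m) = (\<lambda>h. R h $ m - (\<Sum>j<m. a h m j * T h $ j))"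
      using R by (auto simp: algebra_simps)
    then show ?case using less a R_diff unfolding fps_differentiable_def
      by (simp add: differentiable_diff differentiable_sum differentiable_mult)
  qed
qed

lemma has_fps_deriv_inverse:
  assumes S: "has_fps_deriv S S' t" and S0: "\<forall>h. S h $ 0 = 1"
  shows "has_fps_deriv (\<lambda>h. inverse (S h)) (- S' * inverse (S t) ^ 2) t"
proof -
  define T where "T h = inverse (S h)" for h
  have ST: "T h * S h = 1" for h using S0 by (simp add: T_def inverse_mult_eq_1)
  have "fps_differentiable T t"
  proof (rule fps_differentiable_triangular[where R = "\<lambda>h. 1" and a = "\<lambda>h m j. S h $ (m - j)"])
    show "\<forall>h m. (1::real fps) $ m = T h $ m + (\<Sum>j<m. S h $ (m - j) * T h $ j)"
    proof (intro allI)
      fix h m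
      have "(1::real fps) $ m = (T h * S h) $ m" using ST by simp
      also have "\<dots> = (\<Sum>j<m. T h $ j * S h $ (m - j)) + T h $ m * S h $ 0"
        by (simp add: fps_mult_nth atLeast0AtMost lessThan_Suc_atMost[symmetric])
      finally show "(1::real fps) $ m = T h $ m + (\<Sum>j<m. S h $ (m - j) * T h $ j)"
        using S0 by (simp add: mult.commute)
    qed
    show "\<forall>m j. (\<lambda>h. S h $ (m - j)) differentiable (at t)"
      using S unfolding has_fps_deriv_def real_differentiable_def by blast
  qed (simp add: fps_differentiable_def)
  then obtain T' where T': "has_fps_deriv T T' t"
    using fps_differentiable_has_fps_deriv by blast
  have "has_fps_deriv (\<lambda>h. T h * S h) (T' * S t + T t * S') t"
    by (rule has_fps_deriv_mult[OF T' S])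
  moreover have "has_fps_deriv (\<lambda>h. T h * S h) 0 t" using ST has_fps_deriv_const[of 1 t] by simp
  ultimately have "T' * S t + T t * S' = 0" using has_fps_deriv_unique by blast
  then have "T' * S t * T t + T t * S' * T t = 0" by (metis distrib_right mult_zero_left)
  then have "T' = - S' * T t ^ 2" using ST[of t]
    by (simp add: power2_eq_square algebra_simps eq_neg_iff_add_eq_0)
  then show ?thesis using T' by (simp add: T_def[abs_def])
qed

text \<open>Composition with a series \<open>g = X + \<dots>\<close> is a unitriangular change of coefficients.\<close>
lemma fps_differentiable_compose_cancel:
  assumes g: "has_fps_deriv g g' t" and g0: "\<forall>h. g h $ 0 = 0" and g1: "\<forall>h. g h $ 1 = 1"
    and ag: "fps_differentiable (\<lambda>h. a h oo g h) t"
  shows "fps_differentiable a t"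
proof (rule fps_differentiable_triangular[where R = "\<lambda>h. a h oo g h" and a = "\<lambda>h m j. (g h ^ j) $ m"])
  show "\<forall>h m. (a h oo g h) $ m = a h $ m + (\<Sum>j<m. (g h ^ j) $ m * a h $ j)"
    using g0 g1 by (simp add: fps_compose_nth atLeast0AtMost lessThan_Suc_atMost[symmetric]
        startsby_zero_power_nth_same mult.commute)
  show "\<forall>m j. (\<lambda>h. (g h ^ j) $ m) differentiable (at t)"
    using has_fps_deriv_power[OF g] unfolding has_fps_deriv_def real_differentiable_def by blast
qed (fact ag)

lemma has_fps_deriv_exp_compose:
  assumes "has_fps_deriv A A' t" and "\<forall>h. A h $ 0 = 0"
  shows "has_fps_deriv (\<lambda>h. fps_exp 1 oo A h) ((fps_exp 1 oo A t) * A') t"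
  using has_fps_deriv_compose[OF has_fps_deriv_const assms, of "fps_exp 1"] by simp

definition has_fls_deriv :: "(real \<Rightarrow> real fls) \<Rightarrow> real fls \<Rightarrow> real \<Rightarrow> bool" where
  "has_fls_deriv S S' t \<longleftrightarrow> (\<forall>m. ((\<lambda>h. S h $$ m) has_real_derivative S' $$ m) (at t))"

lemma has_fls_deriv_unique: "has_fls_deriv S A t \<Longrightarrow> has_fls_deriv S B t \<Longrightarrow> A = B"
  unfolding has_fls_deriv_def fls_eq_iff using DERIV_unique by blast

lemma has_fls_deriv_const: "has_fls_deriv (\<lambda>h. c) 0 t"
  by (simp add: has_fls_deriv_def)

lemma has_fls_deriv_add:
  "has_fls_deriv S S' t \<Longrightarrow> has_fls_deriv T T' t \<Longrightarrow> has_fls_deriv (\<lambda>h. S h + T h) (S' + T') t"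
  by (auto simp: has_fls_deriv_def intro!: derivative_eq_intros)

lemma has_fls_deriv_fps_to_fls:
  "has_fps_deriv S S' t \<Longrightarrow> has_fls_deriv (\<lambda>h. fps_to_fls (S h)) (fps_to_fls S') t"
  by (auto simp: has_fls_deriv_def has_fps_deriv_def)

lemma has_fls_deriv_differentiable:
  "has_fls_deriv S S' t \<Longrightarrow> (\<lambda>h. S h $$ m) differentiable (at t)"
  unfolding has_fls_deriv_def real_differentiable_def by blast

lemma has_fls_deriv_pdS:
  "has_fls_deriv (\<lambda>h. S (x(i := h))) S' (x i) \<Longrightarrow> pdS i S x = S'"
proof -
  assume "has_fls_deriv (\<lambda>h. S (x(i := h))) S' (x i)"
  then have "(\<lambda>m. deriv (\<lambda>h. S (x(i := h)) $$ m) (x i)) = fls_nth S'"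
    by (auto simp: has_fls_deriv_def intro!: DERIV_imp_deriv)
  then show ?thesis by (simp add: pdS_def pd_def fls_nth_inverse)
qed

section \<open>Exponential and logarithm of power series without constant term\<close>

lemma fps_deriv_exp_compose:
  fixes u :: "'a::field_char_0 fps"
  shows "u $ 0 = 0 \<Longrightarrow> fps_deriv (fps_exp 1 oo u) = (fps_exp 1 oo u) * fps_deriv u"
  by (simp add: fps_compose_deriv)

lemma fps_exp_compose_unique:
  fixes f u :: "'a::field_char_0 fps"
  assumes u0: "u $ 0 = 0" and f0: "f $ 0 = 1" and D: "fps_deriv f = f * fps_deriv u"
  shows "f = fps_exp 1 oo u"
proof -
  define e where "e = fps_exp 1 oo u"
  have e0: "e $ 0 = 1" by (simp add: e_def)
  have De: "fps_deriv e = e * fps_deriv u" unfolding e_def by (rule fps_deriv_exp_compose[OF u0])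
  have "fps_deriv (f * inverse e) = f * fps_deriv u * inverse e - f * (e * fps_deriv u) * (inverse e)^2"
    using e0 by (simp add: D De fps_inverse_deriv)
  also have "\<dots> = 0"
    using e0 by (simp add: power2_eq_square algebra_simps inverse_mult_eq_1')
  finally have "fps_deriv (f * inverse e) = 0" .
  then have "f * inverse e = fps_const ((f * inverse e) $ 0)" by (simp only: fps_deriv_eq_0_iff)
  also have "(f * inverse e) $ 0 = 1" using f0 e0 by simp
  finally have "f * inverse e * e = e" by simp
  then show ?thesis using e0 by (simp add: e_def mult.assoc inverse_mult_eq_1)
qed

lemma fps_exp_compose_add:
  fixes u v :: "'a::field_char_0 fps"
  assumes "u $ 0 = 0" and "v $ 0 = 0"
  shows "fps_exp 1 oo (u + v) = (fps_exp 1 oo u) * (fps_exp 1 oo v)"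
  by (rule sym, rule fps_exp_compose_unique)
     (use assms in \<open>simp_all add: fps_deriv_exp_compose algebra_simps\<close>)

lemma fps_exp_compose_minus:
  fixes u :: "'a::field_char_0 fps"
  assumes "u $ 0 = 0"
  shows "fps_exp 1 oo (- u) = inverse (fps_exp 1 oo u)"
proof -
  have "(fps_exp 1 oo (- u)) * (fps_exp 1 oo u) = 1"
    using fps_exp_compose_add[of "- u" u] assms by simp
  then show ?thesis by (metis fps_inverse_unique mult.commute)
qed

lemma fps_exp_compose_power:
  fixes u :: "'a::field_char_0 fps"
  assumes u0: "u $ 0 = 0"
  shows "(fps_exp 1 oo u) ^ n = fps_exp 1 oo (of_nat n * u)"
proof (induction n)
  case (Suc n)
  have "fps_exp 1 oo (of_nat (Suc n) * u) = fps_exp 1 oo (u + of_nat n * u)"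
    by (simp add: algebra_simps)
  also have "\<dots> = (fps_exp 1 oo u) * (fps_exp 1 oo (of_nat n * u))"
    by (rule fps_exp_compose_add) (use u0 in \<open>simp_all flip: fps_of_nat\<close>)
  finally show ?case by (simp add: Suc)
qed simp

lemma fps_ln_compose_exp_compose:
  fixes u :: "'a::field_char_0 fps"
  assumes u0: "u $ 0 = 0"
  shows "fps_ln 1 oo ((fps_exp 1 oo u) - 1) = u"
proof -
  define b where "b = (fps_exp 1 oo u) - 1"
  have b0: "b $ 0 = 0" by (simp add: b_def)
  have "fps_deriv (fps_ln 1 oo b) = inverse ((1 + fps_X) oo b) * fps_deriv b"
    using b0 by (simp add: fps_compose_deriv fps_ln_deriv fps_inverse_compose)
  also have "(1 + fps_X) oo b = fps_exp 1 oo u"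
    using b0 by (simp add: fps_compose_add_distrib b_def)
  finally have "fps_deriv (fps_ln 1 oo b) = fps_deriv u"
    using u0 by (simp add: b_def fps_deriv_exp_compose mult.assoc[symmetric] inverse_mult_eq_1)
  then show ?thesis using u0 by (simp add: fps_deriv_eq_iff b_def)
qed

definition log1m_inv :: "'a::field_char_0 fps \<Rightarrow> 'a fps" where
  "log1m_inv u = - (fps_ln 1 oo (- u))"

lemma log1m_inv_nth_0 [simp]: "log1m_inv u $ 0 = 0"
  by (simp add: log1m_inv_def)

lemma fps_exp_compose_ln_compose:
  fixes b :: "'a::field_char_0 fps"
  assumes b0: "b $ 0 = 0"
  shows "fps_exp 1 oo (fps_ln 1 oo b) = 1 + b"
proof -
  have Dln: "fps_deriv (fps_ln 1 oo b) = inverse (1 + b) * fps_deriv b"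
    using b0 by (simp add: fps_compose_deriv fps_ln_deriv fps_inverse_compose fps_compose_add_distrib
        mult.commute)
  have "(1 + b) * inverse (1 + b) = 1" using b0 by (simp add: inverse_mult_eq_1')
  then have "fps_deriv (1 + b) = (1 + b) * fps_deriv (fps_ln 1 oo b)"
    unfolding Dln by (simp add: mult.assoc[symmetric])
  moreover have "(fps_ln 1 oo b) $ 0 = 0" "(1 + b) $ 0 = 1" using b0 by simp_all
  ultimately show ?thesis by (metis fps_exp_compose_unique)
qed

lemma fps_exp_compose_log1m_inv:
  fixes u :: "'a::field_char_0 fps"
  assumes "u $ 0 = 0"
  shows "fps_exp 1 oo log1m_inv u = inverse (1 - u)"
  using fps_exp_compose_ln_compose[of "- u"] assms
  by (simp add: log1m_inv_def fps_exp_compose_minus)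

lemma log1m_inv_nth:
  fixes u :: "'a::field_char_0 fps"
  shows "log1m_inv u $ n = (\<Sum>j=1..n. (u ^ j) $ n / of_nat j)"
proof -
  have "log1m_inv u $ n = - (\<Sum>j=0..n. fps_ln 1 $ j * ((- u) ^ j) $ n)"
    by (simp add: log1m_inv_def fps_compose_nth)
  also have "\<dots> = - (\<Sum>j=1..n. fps_ln 1 $ j * ((- u) ^ j) $ n)"
    by (subst sum.atLeast_Suc_atMost[OF le0]) simp
  also have "\<dots> = (\<Sum>j=1..n. (u ^ j) $ n / of_nat j)"
    unfolding sum_negf[symmetric]
  proof (intro sum.cong refl)
    fix j assume "j \<in> {1..n}"
    then obtain i where j: "j = Suc i" by (cases j) auto
    have "- u = fps_const (- 1) * u" by (simp add: fps_eq_iff)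
    then have "(- u) ^ j = fps_const ((- 1) ^ j) * u ^ j"
      by (simp add: power_mult_distrib fps_const_power)
    then have h2: "((- u) ^ j) $ n = - ((- 1) ^ i * (u ^ j) $ n)"
      by (simp add: fps_mult_left_const_nth j)
    have m: "(- 1 :: 'a) ^ i * (- 1) ^ i = 1" by (simp flip: power_add)
    have "- (fps_ln 1 $ j * ((- u) ^ j) $ n) = ((- 1) ^ i * (- 1) ^ i) * (u ^ j) $ n / of_nat j"
      unfolding h2 by (simp add: j fps_ln_nth divide_inverse ac_simps)
    then show "- (fps_ln 1 $ j * ((- u) ^ j) $ n) = (u ^ j) $ n / of_nat j"
      unfolding m by simp
  qed
  finally show ?thesis .
qed

section \<open>Smooth functions of infinitely many variables\<close>

lemma smooth_pd: "smooth f \<Longrightarrow> smooth (pd j f)"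
proof -
  assume s: "smooth f"
  have "iter_pd js (pd j f) = iter_pd (js @ [j]) f" for js by (simp add: iter_pd_def)
  then show "smooth (pd j f)" using s unfolding smooth_def by presburger
qed

lemma smooth_has_real_derivative:
  assumes "smooth f"
  shows "((\<lambda>h. f (x(j := h))) has_real_derivative pd j f (x(j := s))) (at s)"
proof -
  have "(\<lambda>h. f ((x(j := s))(j := h))) differentiable (at ((x(j := s)) j))"
    using assms unfolding smooth_def iter_pd_def by (metis foldr.simps(1) id_apply)
  then show ?thesis by (simp add: pd_def DERIV_deriv_iff_real_differentiable)
qed

lemma second_difference_mvt:
  assumes f: "smooth f" and ij: "i \<noteq> j" and h: "0 < h"
  obtains \<xi> \<eta> where "x i < \<xi>" "\<xi> < x i + h" "x j < \<eta>" "\<eta> < x j + h"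
    "f (x(i := x i + h, j := x j + h)) - f (x(i := x i + h)) - f (x(j := x j + h)) + f x
       = h\<^sup>2 * pd j (pd i f) (x(i := \<xi>, j := \<eta>))"
proof -
  define \<psi> where "\<psi> s = f (x(i := s, j := x j + h)) - f (x(i := s))" for s
  define \<psi>' where "\<psi>' s = pd i f (x(i := s, j := x j + h)) - pd i f (x(i := s))" for s
  have "DERIV \<psi> s :> \<psi>' s" for s
    using DERIV_diff[OF smooth_has_real_derivative[OF f, of "x(j := x j + h)" i s]
        smooth_has_real_derivative[OF f, of x i s]] ij
    unfolding \<psi>_def \<psi>'_def by (simp add: fun_upd_twist)
  then obtain \<xi> where \<xi>: "x i < \<xi>" "\<xi> < x i + h" "\<psi> (x i + h) - \<psi> (x i) = h * \<psi>' \<xi>"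
    using MVT2[of "x i" "x i + h" \<psi> \<psi>'] h by auto
  define \<phi> where "\<phi> r = pd i f (x(i := \<xi>, j := r))" for r
  have "DERIV \<phi> r :> pd j (pd i f) (x(i := \<xi>, j := r))" for r
    unfolding \<phi>_def using smooth_has_real_derivative[OF smooth_pd[OF f, of i], of "x(i := \<xi>)" j r] by simp
  then obtain \<eta> where \<eta>: "x j < \<eta>" "\<eta> < x j + h"
      "\<phi> (x j + h) - \<phi> (x j) = h * pd j (pd i f) (x(i := \<xi>, j := \<eta>))"
    using MVT2[of "x j" "x j + h" \<phi> "\<lambda>r. pd j (pd i f) (x(i := \<xi>, j := r))"] h by auto
  have "\<psi>' \<xi> = \<phi> (x j + h) - \<phi> (x j)"
    unfolding \<psi>'_def \<phi>_def using ij by (simp add: fun_upd_idem)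
  moreover have "\<psi> (x i + h) - \<psi> (x i) =
      f (x(i := x i + h, j := x j + h)) - f (x(i := x i + h)) - f (x(j := x j + h)) + f x"
    unfolding \<psi>_def using ij by (simp add: fun_upd_idem)
  ultimately show ?thesis using that \<xi> \<eta> by (simp add: power2_eq_square)
qed

lemma continuous_on_pd_pd_slice:
  assumes f: "smooth f" and ij: "i \<noteq> j"
  shows "continuous_on UNIV (\<lambda>p::real \<times> real. pd j (pd i f) (x(i := fst p, j := snd p)))"
proof -
  have "\<forall>js x0 I. finite I \<longrightarrow>
          continuous_on UNIV (\<lambda>y::pt. iter_pd js f (\<lambda>k. if k \<in> I then y k else x0 k))"
    using f unfolding smooth_def by blast
  then have c: "continuous_on UNIV (\<lambda>y::pt. iter_pd [j, i] f (\<lambda>k. if k \<in> {i, j} then y k else x k))"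
    by (meson finite.emptyI finite.insertI)
  have slice: "continuous_on UNIV (\<lambda>p::real \<times> real. x(i := fst p, j := snd p))"
  proof (rule continuous_on_coordinatewise_then_product)
    fix k
    show "continuous_on UNIV (\<lambda>p::real \<times> real. (x(i := fst p, j := snd p)) k)"
      by (cases "k = j"; cases "k = i") (auto intro!: continuous_intros)
  qed
  have eq: "(\<lambda>k. if k \<in> {i, j} then (x(i := fst p, j := snd p)) k else x k) =
            x(i := fst p, j := snd p)" for p
    by auto
  have "continuous_on UNIV (\<lambda>p::real \<times> real.
          iter_pd [j, i] f (\<lambda>k. if k \<in> {i, j} then (x(i := fst p, j := snd p)) k else x k))"
    by (rule continuous_on_compose2[OF c slice]) auto
  then show ?thesis unfolding eq by (simp add: iter_pd_def)
qed

lemma second_difference_quotient_tendsto: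
  assumes f: "smooth f" and ij: "i \<noteq> j"
  shows "((\<lambda>h. (f (x(i := x i + h, j := x j + h)) - f (x(i := x i + h)) - f (x(j := x j + h)) + f x)
             / h\<^sup>2) \<longlongrightarrow> pd j (pd i f) x) (at_right 0)"
    (is "(?Q \<longlongrightarrow> _) _")
proof -
  define g where "g p = pd j (pd i f) (x(i := fst p, j := snd p))" for p :: "real \<times> real"
  have "\<forall>h. \<exists>p. 0 < h \<longrightarrow> x i < fst p \<and> fst p < x i + h \<and> x j < snd p \<and> snd p < x j + h \<and>
            ?Q h = g p"
  proof
    fix h
    show "\<exists>p. 0 < h \<longrightarrow> x i < fst p \<and> fst p < x i + h \<and> x j < snd p \<and> snd p < x j + h \<and>
            ?Q h = g p"
    proof (cases "0 < h")
      case True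
      then obtain \<xi> \<eta> where "x i < \<xi>" "\<xi> < x i + h" "x j < \<eta>" "\<eta> < x j + h"
          "f (x(i := x i + h, j := x j + h)) - f (x(i := x i + h)) - f (x(j := x j + h)) + f x
             = h\<^sup>2 * pd j (pd i f) (x(i := \<xi>, j := \<eta>))"
        using second_difference_mvt[OF f ij] by blast
      then show ?thesis using True by (intro exI[of _ "(\<xi>, \<eta>)"]) (simp add: g_def)
    qed simp
  qed
  then obtain p where p: "\<forall>h. 0 < h \<longrightarrow> x i < fst (p h) \<and> fst (p h) < x i + h \<and>
            x j < snd (p h) \<and> snd (p h) < x j + h \<and> ?Q h = g (p h)"
    by (rule choice[THEN exE])
  have "\<forall>\<^sub>F h in at_right 0. 0 < (h::real)" by (rule eventually_at_right_less)
  then have ev: "\<forall>\<^sub>F h in at_right 0. x i \<le> fst (p h) \<and> fst (p h) \<le> x i + h \<and>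
                   x j \<le> snd (p h) \<and> snd (p h) \<le> x j + h \<and> g (p h) = ?Q h"
    by eventually_elim (use p in force)
  have lim: "((\<lambda>h. c + h) \<longlongrightarrow> c) (at_right 0)" for c :: real
    by (auto intro!: tendsto_eq_intros)
  have l1: "((\<lambda>h. fst (p h)) \<longlongrightarrow> x i) (at_right 0)"
    by (rule tendsto_sandwich[OF _ _ tendsto_const lim]) (use ev in \<open>auto elim!: eventually_mono\<close>)
  have l2: "((\<lambda>h. snd (p h)) \<longlongrightarrow> x j) (at_right 0)"
    by (rule tendsto_sandwich[OF _ _ tendsto_const lim]) (use ev in \<open>auto elim!: eventually_mono\<close>)
  have "((\<lambda>h. g (p h)) \<longlongrightarrow> g (x i, x j)) (at_right 0)"
    using continuous_on_tendsto_compose[OF continuous_on_pd_pd_slice[OF f ij, of x]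
        tendsto_Pair[OF l1 l2]]
    by (simp add: g_def)
  moreover have "\<forall>\<^sub>F h in at_right 0. g (p h) = ?Q h"
    using ev by (auto elim!: eventually_mono)
  ultimately show ?thesis by (simp add: g_def tendsto_cong)
qed

text \<open>Schwarz's theorem: the second difference quotient is symmetric in \<open>i\<close> and \<open>j\<close>.\<close>
lemma pd_commute:
  assumes f: "smooth f"
  shows "pd i (pd j f) = pd j (pd i f)"
proof
  fix x
  show "pd i (pd j f) x = pd j (pd i f) x"
  proof (cases "i = j")
    case False
    have Q_sym: "(\<lambda>h. (f (x(j := x j + h, i := x i + h)) - f (x(j := x j + h))
                  - f (x(i := x i + h)) + f x) / h\<^sup>2) =
          (\<lambda>h. (f (x(i := x i + h, j := x j + h)) - f (x(i := x i + h))
                  - f (x(j := x j + h)) + f x) / h\<^sup>2)"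
      by (rule ext) (simp add: fun_upd_twist[OF False] algebra_simps)
    have "((\<lambda>h. (f (x(i := x i + h, j := x j + h)) - f (x(i := x i + h))
                  - f (x(j := x j + h)) + f x) / h\<^sup>2) \<longlongrightarrow> pd i (pd j f) x) (at_right 0)"
      using second_difference_quotient_tendsto[OF f False[symmetric], of x] unfolding Q_sym .
    from tendsto_unique[OF _ this second_difference_quotient_tendsto[OF f False]]
    show ?thesis by simp
  qed simp
qed

text \<open>The operator \<open>D(z) = \<Sum>\<^sub>m\<^sub>\<ge>\<^sub>1 z\<^sup>-\<^sup>m/m \<partial>\<^sub>t\<^sub>m\<close> of dispersionless KP theory, as a series in \<open>w = 1/z\<close>.\<close>
definition Dz :: "(pt \<Rightarrow> real) \<Rightarrow> pt \<Rightarrow> real fps" where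
  "Dz f x = Abs_fps (\<lambda>m. if m = 0 then 0 else pd m f x / of_nat m)"

lemma Dz_nth_0 [simp]: "Dz f x $ 0 = 0"
  by (simp add: Dz_def)

lemma has_fps_deriv_Dz:
  assumes f: "smooth f"
  shows "has_fps_deriv (\<lambda>h. Dz f (x(i := h))) (Dz (pd i f) x) (x i)"
  unfolding has_fps_deriv_def
proof
  fix m
  have D: "((\<lambda>h. pd m f (x(i := h)) / of_nat m) has_real_derivative pd i (pd m f) x / of_nat m)
           (at (x i))"
    using DERIV_cdivide[OF smooth_has_real_derivative[OF smooth_pd[OF f, of m], of x i "x i"]]
    by simp
  show "((\<lambda>h. Dz f (x(i := h)) $ m) has_real_derivative Dz (pd i f) x $ m) (at (x i))"
  proof (cases "m = 0")
    case False
    then show ?thesis using D by (simp add: Dz_def pd_commute[OF f])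
  qed (simp add: Dz_def)
qed

section \<open>Substituting \<open>k = k(z)\<close>\<close>

text \<open>For \<open>E = 1 + O(w)\<close>, \<open>kser E = z E(1/z)\<close> is the series \<open>k(z)\<close> in \<open>w = 1/z\<close>,
  \<open>kinv E = 1/k(z)\<close> is a power series in \<open>w\<close>, and \<open>subst_k E f = f(k(z))\<close>.\<close>
definition kser :: "real fps \<Rightarrow> real fls" where
  "kser E = fls_X_inv * fps_to_fls E"

definition kinv :: "real fps \<Rightarrow> real fps" where
  "kinv E = fps_X * inverse E"

definition subst_k :: "real fps \<Rightarrow> real fls \<Rightarrow> real fls" where
  "subst_k E f = fls_compose_fps f (kinv E)"

definition fls_is_fps :: "real fls \<Rightarrow> bool" where
  "fls_is_fps f \<longleftrightarrow> (\<forall>m<0. f $$ m = 0)"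

lemma fls_X_inv_mult_X: "fls_X_inv * (fls_X :: real fls) = 1"
  and fls_X_mult_X_inv: "fls_X * (fls_X_inv :: real fls) = 1"
  by (simp_all add: fls_eq_iff fls_X_inv_times_conv_shift fls_X_times_conv_shift)

context
  fixes E :: "real fps"
  assumes E0: "E $ 0 = 1"
begin

lemma kinv_nth_0: "kinv E $ 0 = 0"
  by (simp add: kinv_def)

lemma kinv_nth_1: "kinv E $ 1 = 1"
  using E0 by (simp add: kinv_def)

lemma kinv_nonzero: "kinv E \<noteq> 0"
  using kinv_nth_1 by auto

lemma kser_mult_kinv: "kser E * fps_to_fls (kinv E) = 1"
proof -
  have "kser E * fps_to_fls (kinv E) = (fls_X_inv * fls_X) * fps_to_fls (E * inverse E)"
    by (simp add: kser_def kinv_def fls_times_fps_to_fls ac_simps)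
  also have "E * inverse E = 1" using E0 by (simp add: inverse_mult_eq_1')
  finally show ?thesis by (simp add: fls_X_inv_mult_X)
qed

lemma fls_regpart_inverse_kser: "fls_regpart (inverse (kser E)) = kinv E"
  using kser_mult_kinv by (metis fls_regpart_fps_trivial inverse_unique)

lemma subst_k_add: "subst_k E (f + g) = subst_k E f + subst_k E g"
  using kinv_nonzero kinv_nth_0 by (simp add: subst_k_def fls_compose_fps_add)

lemma subst_k_diff: "subst_k E (f - g) = subst_k E f - subst_k E g"
  using kinv_nonzero kinv_nth_0 by (simp add: subst_k_def fls_compose_fps_diff)

lemma subst_k_mult: "subst_k E (f * g) = subst_k E f * subst_k E g"
  using kinv_nonzero kinv_nth_0 by (simp add: subst_k_def fls_compose_fps_mult)

lemma subst_k_power: "subst_k E (f ^ n) = subst_k E f ^ n"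
  using kinv_nonzero kinv_nth_0 by (simp add: subst_k_def fls_compose_fps_power)

lemma subst_k_const: "subst_k E (fls_const c) = fls_const c"
  by (simp add: subst_k_def)

lemma subst_k_sum: "subst_k E (\<Sum>j\<in>A. f j) = (\<Sum>j\<in>A. subst_k E (f j))"
proof (induction A rule: infinite_finite_induct)
  case (insert x F)
  then show ?case by (simp add: subst_k_add)
qed (auto simp: subst_k_def)

lemma subst_k_fps_to_fls: "subst_k E (fps_to_fls a) = fps_to_fls (a oo kinv E)"
  using kinv_nonzero kinv_nth_0 by (simp add: subst_k_def)

lemma subst_k_X: "subst_k E fls_X = fps_to_fls (kinv E)"
  by (simp add: subst_k_def)

lemma subst_k_X_inv: "subst_k E fls_X_inv = kser E"
proof -
  have "subst_k E fls_X_inv = inverse (fps_to_fls (kinv E))"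
    using kinv_nonzero kinv_nth_0 by (simp add: subst_k_def fls_compose_fps_inverse flip: fls_inverse_X)
  also have "\<dots> = kser E" using kser_mult_kinv by (metis inverse_unique mult.commute)
  finally show ?thesis .
qed

lemma subst_k_inj: "subst_k E f = subst_k E g \<Longrightarrow> f = g"
  using kinv_nonzero kinv_nth_0 fls_compose_fps_eq_0_iff[of "kinv E" "f - g"]
  by (simp add: subst_k_def fls_compose_fps_diff)

lemma fls_subdegree_subst_k: "fls_subdegree (subst_k E f) = fls_subdegree f"
proof -
  have "subdegree (kinv E) = 1" using kinv_nth_0 kinv_nth_1 by (intro subdegreeI) auto
  then show ?thesis using kinv_nth_0 by (simp add: subst_k_def)
qed

lemma fls_is_fps_subst_k: "fls_is_fps f \<Longrightarrow> fls_is_fps (subst_k E f)"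
proof -
  assume "fls_is_fps f"
  then have "fps_to_fls (fls_regpart f) = f"
    by (intro fls_regpart_to_fls_trivial fls_subdegree_ge0I) (auto simp: fls_is_fps_def)
  then have "subst_k E f = fps_to_fls (fls_regpart f oo kinv E)" by (metis subst_k_fps_to_fls)
  then show ?thesis by (simp add: fls_is_fps_def)
qed

lemma subst_k_X_inv_power_mult:
  "subst_k E (fls_X_inv ^ K * fps_to_fls F) = fls_X_inv ^ K * fps_to_fls (E ^ K * (F oo kinv E))"
  by (simp add: subst_k_mult subst_k_power subst_k_X_inv subst_k_fps_to_fls kser_def
      power_mult_distrib fls_times_fps_to_fls fps_to_fls_power ac_simps)

lemma kser_power_nth:
  "(kser E ^ j) $$ m = (if m + int j < 0 then 0 else (E ^ j) $ nat (m + int j))"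
  by (simp add: kser_def power_mult_distrib fls_X_inv_power_times_conv_shift
      fps_to_fls_power[symmetric])

text \<open>For the largest \<open>J\<close> with \<open>c J \<noteq> 0\<close>, the coefficient of \<open>z\<^sup>J\<close> is \<open>c J\<close>.\<close>
lemma kser_polynomial_eq_0:
  assumes "fls_is_fps (\<Sum>j=1..n. fls_const (c j) * kser E ^ j)"
  shows "\<forall>j\<in>{1..n}. c j = 0"
proof (rule ccontr)
  assume "\<not> (\<forall>j\<in>{1..n}. c j = 0)"
  then have ne: "{j\<in>{1..n}. c j \<noteq> 0} \<noteq> {}" by auto
  define J where "J = Max {j\<in>{1..n}. c j \<noteq> 0}"
  have J: "J \<in> {j\<in>{1..n}. c j \<noteq> 0}" unfolding J_def by (rule Max_in) (use ne in auto)
  have above: "c j = 0" if "j \<in> {1..n}" "J < j" for j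
    using that Max_ge[of "{j\<in>{1..n}. c j \<noteq> 0}" j] unfolding J_def by fastforce
  have "(\<Sum>j=1..n. fls_const (c j) * kser E ^ j) $$ (- int J) = (\<Sum>j\<in>{J}. c j * (kser E ^ j) $$ (- int J))"
    unfolding fls_nth_sum fls_mult_const_nth
  proof (rule sum.mono_neutral_right)
    show "\<forall>j\<in>{1..n} - {J}. c j * (kser E ^ j) $$ (- int J) = 0"
      using above by (auto simp: kser_power_nth not_less_iff_gr_or_eq)
  qed (use J in auto)
  also have "\<dots> = c J" using E0 by (simp add: kser_power_nth fps_power_zeroth)
  finally show False using assms J by (auto simp: fls_is_fps_def)
qed

end

section \<open>The Lagrange expansion of \<open>k(z)\<^sup>n\<close>\<close>

text \<open>\<open>is_divided_difference E M\<close> says, coefficientwise, that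
  \<open>w\<^sub>2 E(w\<^sub>1) - w\<^sub>1 E(w\<^sub>2) = (w\<^sub>2 - w\<^sub>1) M(w\<^sub>1, w\<^sub>2)\<close>, i.e. \<open>k(z\<^sub>1) - k(z\<^sub>2) = (z\<^sub>1 - z\<^sub>2) M\<close>.\<close>
definition is_divided_difference :: "real fps \<Rightarrow> (nat \<Rightarrow> nat \<Rightarrow> real) \<Rightarrow> bool" where
  "is_divided_difference E M \<longleftrightarrow> (\<forall>i j.
     (if j = 1 then E $ i else 0) - (if i = 1 then E $ j else 0) =
     (if 1 \<le> j then M i (j - 1) else 0) - (if 1 \<le> i then M (i - 1) j else 0))"

text \<open>Bivariate series are handled as elements of \<open>\<real>((w\<^sub>1))[[w\<^sub>2]]\<close>.\<close>
definition lift_fps :: "real fps \<Rightarrow> real fls fps" where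
  "lift_fps a = Abs_fps (\<lambda>n. fls_const (a $ n))"

definition bivariate_fps :: "(nat \<Rightarrow> nat \<Rightarrow> real) \<Rightarrow> real fls fps" where
  "bivariate_fps f = Abs_fps (\<lambda>j. fps_to_fls (Abs_fps (\<lambda>i. f i j)))"

lemma lift_fps_nth [simp]: "lift_fps a $ n = fls_const (a $ n)"
  by (simp add: lift_fps_def)

lemma fls_const_sum: "fls_const (\<Sum>i\<in>A. f i) = (\<Sum>i\<in>A. fls_const (f i))"
  by (rule fls_eqI) (simp add: fls_nth_sum)

lemma lift_fps_mult [simp]: "lift_fps (a * b) = lift_fps a * lift_fps b"
  and lift_fps_one [simp]: "lift_fps 1 = 1"
  and lift_fps_X [simp]: "lift_fps fps_X = fps_X"
  and lift_fps_deriv [simp]: "lift_fps (fps_deriv a) = fps_deriv (lift_fps a)"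
  by (simp_all add: fps_eq_iff fls_eq_iff fps_mult_nth fls_const_sum fls_of_nat)

lemma lift_fps_power [simp]: "lift_fps (a ^ n) = lift_fps a ^ n"
  by (induction n) simp_all

lemma lift_fps_exp_compose:
  assumes "A $ 0 = 0"
  shows "lift_fps (fps_exp 1 oo A) = fps_exp 1 oo lift_fps A"
  using assms by (intro fps_exp_compose_unique)
    (simp_all flip: lift_fps_deriv lift_fps_mult add: fps_deriv_exp_compose)

lemma bivariate_fps_nth: "bivariate_fps f $ j $$ k = (if k < 0 then 0 else f (nat k) j)"
  by (simp add: bivariate_fps_def)

lemma bivariate_fps_bone [simp]: "bivariate_fps bone = 1"
  by (simp add: fps_eq_iff fls_eq_iff bivariate_fps_def bone_def)

lemma bivariate_fps_bmul: "bivariate_fps (bmul f g) = bivariate_fps f * bivariate_fps g"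
proof (rule fps_ext, rule fls_eqI)
  fix j :: nat and k :: int
  show "bivariate_fps (bmul f g) $ j $$ k = (bivariate_fps f * bivariate_fps g) $ j $$ k"
  proof (cases "k < 0")
    case True
    then show ?thesis
      by (simp add: bivariate_fps_def fps_mult_nth fls_nth_sum flip: fls_times_fps_to_fls)
  next
    case False
    then obtain i where k: "k = int i" by (metis nonneg_int_cases not_less)
    have "(bivariate_fps f * bivariate_fps g) $ j =
          (\<Sum>b=0..j. fps_to_fls (Abs_fps (\<lambda>i. f i b) * Abs_fps (\<lambda>i. g i (j - b))))"
      by (simp add: fps_mult_nth bivariate_fps_def fls_times_fps_to_fls)
    then have "(bivariate_fps f * bivariate_fps g) $ j $$ k =
               (\<Sum>b=0..j. \<Sum>a=0..i. f a b * g (i - a) (j - b))"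
      by (simp add: k fls_nth_sum fps_mult_nth)
    also have "\<dots> = bmul f g i j"
      unfolding bmul_def by (subst sum.swap) (simp add: atLeast0AtMost)
    finally show ?thesis by (simp add: k bivariate_fps_def)
  qed
qed

lemma bivariate_fps_bpow: "bivariate_fps (bpow G p) = bivariate_fps G ^ p"
  by (induction p) (simp_all add: bpow_def bivariate_fps_bmul)

lemma bivariate_fps_bexp:
  assumes G0: "\<forall>i. G i 0 = 0"
  shows "bivariate_fps (bexp G) = fps_exp 1 oo bivariate_fps G"
proof (rule fps_ext, rule fls_eqI)
  fix j :: nat and k :: int
  have S0: "bivariate_fps G $ 0 = 0" using G0 by (simp add: bivariate_fps_def fps_eq_iff)
  have "(x :: real fls) / fact p = fls_const (1 / fact p) * x" for x p
  proof -
    have "(fact p :: real fls) = fls_const (fact p)" by (metis fls_of_nat of_nat_fact)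
    then show ?thesis by (simp add: divide_inverse fls_inverse_const mult.commute)
  qed
  then have eq: "(fps_exp 1 oo bivariate_fps G) $ j =
                 (\<Sum>p=0..j. fls_const (1 / fact p) * bivariate_fps (bpow G p) $ j)"
    by (simp add: fps_compose_nth bivariate_fps_bpow)
  show "bivariate_fps (bexp G) $ j $$ k = (fps_exp 1 oo bivariate_fps G) $ j $$ k"
  proof (cases "k < 0")
    case True
    then show ?thesis unfolding eq by (simp add: bivariate_fps_nth fls_nth_sum)
  next
    case False
    then obtain i where k: "k = int i" by (metis nonneg_int_cases not_less)
    have "(fps_exp 1 oo bivariate_fps G) $ j $$ k = (\<Sum>p=0..j. bpow G p i j / fact p)"
      unfolding eq by (simp add: k fls_nth_sum bivariate_fps_def)
    also have "\<dots> = (\<Sum>p\<le>i + j. bpow G p i j / fact p)"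
    proof (rule sum.mono_neutral_left)
      show "\<forall>p\<in>{..i + j} - {0..j}. bpow G p i j / fact p = 0"
      proof
        fix p assume "p \<in> {..i + j} - {0..j}"
        then have "j < p" by auto
        then have "(bivariate_fps G ^ p) $ j = 0" using S0 startsby_zero_power_prefix by blast
        then have "bivariate_fps (bpow G p) $ j $$ int i = 0" by (simp add: bivariate_fps_bpow)
        then show "bpow G p i j / fact p = 0" by (simp add: bivariate_fps_def)
      qed
    qed auto
    finally show ?thesis by (simp add: k bexp_def bivariate_fps_def)
  qed
qed

lemma is_divided_difference_bivariate:
  assumes "is_divided_difference E M"
  shows "fps_X * fps_const (fps_to_fls E) - fps_const fls_X * lift_fps E =
         (fps_X - fps_const fls_X) * bivariate_fps M"
proof (rule fps_ext, rule fls_eqI)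
  fix j :: nat and k :: int
  show "(fps_X * fps_const (fps_to_fls E) - fps_const fls_X * lift_fps E) $ j $$ k =
        ((fps_X - fps_const fls_X) * bivariate_fps M) $ j $$ k"
  proof (cases "k < 0")
    case True
    then show ?thesis
      by (simp add: fps_X_mult_nth algebra_simps fps_mult_left_const_nth fls_X_times_conv_shift
          bivariate_fps_nth)
  next
    case False
    then obtain i where k: "k = int i" by (metis nonneg_int_cases not_less)
    have L: "(fps_X * fps_const (fps_to_fls E) - fps_const fls_X * lift_fps E) $ j $$ k =
             (if j = 1 then E $ i else 0) - (if i = 1 then E $ j else 0)"
      by (auto simp: k fps_X_mult_nth fps_mult_left_const_nth fls_X_times_conv_shift)
    have "((fps_X - fps_const fls_X) * bivariate_fps M) $ j =
          (fps_X * bivariate_fps M) $ j - fls_X * bivariate_fps M $ j"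
      by (simp add: algebra_simps fps_mult_left_const_nth)
    moreover have "(fls_X * bivariate_fps M $ j) $$ int i = (if 1 \<le> i then M (i - 1) j else 0)"
      by (auto simp: fls_X_times_conv_shift bivariate_fps_nth nat_diff_distrib)
    moreover have "(fps_X * bivariate_fps M) $ j $$ int i = (if 1 \<le> j then M i (j - 1) else 0)"
      by (auto simp: fps_X_mult_nth bivariate_fps_def)
    ultimately have R: "((fps_X - fps_const fls_X) * bivariate_fps M) $ j $$ k =
        (if 1 \<le> j then M i (j - 1) else 0) - (if 1 \<le> i then M (i - 1) j else 0)"
      by (simp add: k)
    show ?thesis using L R assms unfolding is_divided_difference_def by simp
  qed
qed

text \<open>That is, \<open>E(w\<^sub>2) (1 - k(z\<^sub>1)/k(z\<^sub>2)) = (1 - w\<^sub>2/w\<^sub>1) M\<close>.\<close>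
lemma is_divided_difference_factorisation:
  assumes E0: "E $ 0 = 1" and M: "is_divided_difference E M"
  shows "lift_fps E * (1 - fps_const (kser E) * lift_fps (kinv E)) =
         (1 - fps_const fls_X_inv * fps_X) * bivariate_fps M"
proof -
  have "E * kinv E = fps_X" using E0 by (simp add: kinv_def inverse_mult_eq_1' mult.left_commute)
  then have "lift_fps E * (1 - fps_const (kser E) * lift_fps (kinv E)) =
             lift_fps E - fps_const (kser E) * fps_X"
    by (simp add: algebra_simps flip: lift_fps_mult)
  also have "\<dots> = fps_const fls_X_inv *
                   (fps_const fls_X * lift_fps E - fps_X * fps_const (fps_to_fls E))"
    by (simp add: algebra_simps kser_def fls_X_inv_mult_X fls_X_mult_X_inv flip: fps_const_mult)
  also have "fps_const fls_X * lift_fps E - fps_X * fps_const (fps_to_fls E) =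
             (fps_const fls_X - fps_X) * bivariate_fps M"
    using is_divided_difference_bivariate[OF M] by (metis minus_diff_eq mult_minus_left)
  also have "fps_const fls_X_inv * ((fps_const fls_X - fps_X) * bivariate_fps M) =
             (1 - fps_const fls_X_inv * fps_X) * bivariate_fps M"
    by (simp add: algebra_simps fls_X_inv_mult_X fls_X_mult_X_inv flip: fps_const_mult)
  finally show ?thesis .
qed

text \<open>The logarithm of \<open>is_divided_difference_factorisation\<close>, with \<open>M = exp G\<close>.\<close>
lemma log_kser_expansion:
  assumes A0: "A $ 0 = 0" and EA: "E = fps_exp 1 oo A" and G0: "\<forall>i. G i 0 = 0"
    and M: "is_divided_difference E (bexp G)"
  shows "log1m_inv (fps_const (kser E) * lift_fps (kinv E)) =
         log1m_inv (fps_const fls_X_inv * fps_X) + lift_fps A - bivariate_fps G"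
    (is "log1m_inv ?U = ?V")
proof -
  let ?cX = "fps_const fls_X_inv * fps_X :: real fls fps"
  let ?M = "bivariate_fps (bexp G)"
  have E0: "E $ 0 = 1" by (simp add: EA)
  have U0: "?U $ 0 = 0" by (simp add: kinv_def fps_mult_left_const_nth)
  have cX0: "?cX $ 0 = 0" by (simp add: fps_mult_left_const_nth)
  have G0': "bivariate_fps G $ 0 = 0" using G0 by (simp add: bivariate_fps_def fps_eq_iff)
  have V0: "?V $ 0 = 0" using A0 G0' by simp
  have expG: "fps_exp 1 oo bivariate_fps G = ?M" by (simp add: bivariate_fps_bexp G0)
  have "fps_exp 1 oo ?V =
        (fps_exp 1 oo (log1m_inv ?cX + lift_fps A)) * (fps_exp 1 oo - bivariate_fps G)"
    using fps_exp_compose_add[of "log1m_inv ?cX + lift_fps A" "- bivariate_fps G"] A0 G0' by simp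
  also have "\<dots> =
        (fps_exp 1 oo log1m_inv ?cX) * (fps_exp 1 oo lift_fps A) * (fps_exp 1 oo - bivariate_fps G)"
    using fps_exp_compose_add[of "log1m_inv ?cX" "lift_fps A"] A0 by simp
  also have "\<dots> = inverse (1 - ?cX) * lift_fps E * inverse ?M"
    by (simp add: fps_exp_compose_log1m_inv[OF cX0] fps_exp_compose_minus[OF G0']
        lift_fps_exp_compose[OF A0] EA expG)
  also have "\<dots> = inverse (1 - ?U)"
  proof (rule sym, rule fps_inverse_unique)
    have "(1 - ?U) * (inverse (1 - ?cX) * lift_fps E * inverse ?M) =
          inverse (1 - ?cX) * inverse ?M * (lift_fps E * (1 - ?U))"
      by (simp add: ac_simps)
    also have "\<dots> = (inverse (1 - ?cX) * (1 - ?cX)) * (inverse ?M * ?M)"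
      by (simp add: is_divided_difference_factorisation[OF E0 M] ac_simps)
    also have "\<dots> = 1"
      using cX0 by (simp add: inverse_mult_eq_1 flip: expG)
    finally show "(1 - ?U) * (inverse (1 - ?cX) * lift_fps E * inverse ?M) = 1" .
  qed
  also have "\<dots> = fps_exp 1 oo log1m_inv ?U"
    by (rule fps_exp_compose_log1m_inv[OF U0, symmetric])
  finally have exp_eq: "fps_exp 1 oo ?V = fps_exp 1 oo log1m_inv ?U" .
  have "log1m_inv ?U = fps_ln 1 oo ((fps_exp 1 oo log1m_inv ?U) - 1)"
    by (simp add: fps_ln_compose_exp_compose)
  also have "\<dots> = ?V"
    unfolding exp_eq[symmetric] by (rule fps_ln_compose_exp_compose[OF V0])
  finally show ?thesis .
qed

text \<open>\<open>n\<close> times the coefficient of \<open>w\<^sub>2\<^sup>n\<close> in \<open>log_kser_expansion\<close>.\<close>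
lemma lagrange_kser_expansion:
  assumes A0: "A $ 0 = 0" and EA: "E = fps_exp 1 oo A" and G0: "\<forall>i. G i 0 = 0"
    and M: "is_divided_difference E (bexp G)" and n: "1 \<le> n"
  shows "fls_X_inv ^ n + fls_const (of_nat n * A $ n) - fps_to_fls (Abs_fps (\<lambda>i. of_nat n * G i n)) =
     (\<Sum>j=1..n. fls_const (of_nat n / of_nat j * (kinv E ^ j) $ n) * kser E ^ j)"
proof -
  define U where "U = fps_const (kser E) * lift_fps (kinv E)"
  define cX :: "real fls fps" where "cX = fps_const fls_X_inv * fps_X"
  have nz: "(of_nat n :: real fls) \<noteq> 0" using n by simp
  have cX_n: "log1m_inv cX $ n = fls_X_inv ^ n / of_nat n"
  proof -
    have "log1m_inv cX $ n = (\<Sum>j\<in>{n}. (cX ^ j) $ n / of_nat j)"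
      unfolding log1m_inv_nth
      by (rule sum.mono_neutral_right)
         (use n in \<open>auto simp: cX_def power_mult_distrib fps_const_power fps_mult_left_const_nth\<close>)
    then show ?thesis by (simp add: cX_def power_mult_distrib fps_const_power fps_mult_left_const_nth)
  qed
  have "fls_X_inv ^ n + fls_const (of_nat n * A $ n) - fps_to_fls (Abs_fps (\<lambda>i. of_nat n * G i n))
        = of_nat n * (log1m_inv cX + lift_fps A - bivariate_fps G) $ n"
  proof -
    have "fps_to_fls (Abs_fps (\<lambda>i. of_nat n * G i n)) =
          fls_const (of_nat n) * fps_to_fls (Abs_fps (\<lambda>i. G i n))"
      by (rule fls_eqI) simp
    then show ?thesis
      using nz by (simp add: cX_n bivariate_fps_def algebra_simps fls_of_nat flip: fls_const_mult_const)
  qed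
  also have "\<dots> = of_nat n * log1m_inv U $ n"
    using log_kser_expansion[OF A0 EA G0 M] by (simp add: U_def cX_def)
  also have "\<dots> = (\<Sum>j=1..n. fls_const (of_nat n / of_nat j * (kinv E ^ j) $ n) * kser E ^ j)"
    unfolding log1m_inv_nth sum_distrib_left
  proof (intro sum.cong refl)
    fix j assume "j \<in> {1..n}"
    then have "(of_nat j :: real) \<noteq> 0" by auto
    then show "of_nat n * ((U ^ j) $ n / of_nat j) =
               fls_const (of_nat n / of_nat j * (kinv E ^ j) $ n) * kser E ^ j"
      by (simp add: U_def power_mult_distrib fps_const_power fps_mult_left_const_nth fls_of_nat
          divide_inverse fls_inverse_const ac_simps flip: lift_fps_power fls_const_mult_const)
  qed
  finally show ?thesis .
qed

lemma pospart_nth: "pospart f $$ m = (if m < 0 then f $$ m else 0)"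
  unfolding pospart_def
  by (rule nth_Abs_fls_ex_lower_bound) (auto intro: exI[of _ "fls_subdegree f"])

lemma pospart_eq_sum:
  assumes "\<forall>m < - int n. f $$ m = 0"
  shows "pospart f = (\<Sum>j=1..n. fls_const (f $$ (- int j)) * fls_X_inv ^ j)"
proof (rule fls_eqI)
  fix m :: int
  have "(\<Sum>j=1..n. fls_const (f $$ (- int j)) * fls_X_inv ^ j) $$ m =
        (\<Sum>j=1..n. if m = - int j then f $$ m else 0)"
    by (simp add: fls_nth_sum) (intro sum.cong refl; auto)
  also have "\<dots> = pospart f $$ m"
  proof (cases "m < 0 \<and> - int n \<le> m")
    case True
    then have "(\<Sum>j=1..n. if m = - int j then f $$ m else 0) =
               (\<Sum>j\<in>{nat (- m)}. if m = - int j then f $$ m else 0)"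
      by (intro sum.mono_neutral_right) auto
    then show ?thesis using True by (simp add: pospart_nth)
  next
    case False
    then show ?thesis using assms by (auto simp: pospart_nth intro!: sum.neutral)
  qed
  finally show "pospart f $$ m = (\<Sum>j=1..n. fls_const (f $$ (- int j)) * fls_X_inv ^ j) $$ m" ..
qed

text \<open>Both \<open>(L\<^sup>n)\<^sub>+(k(z))\<close> and the polynomial of \<open>lagrange_kser_expansion\<close> differ from
  \<open>L(k(z))\<^sup>n = z\<^sup>n\<close> by power series in \<open>1/z\<close>, so \<open>kser_polynomial_eq_0\<close> identifies them.\<close>
lemma subst_k_pospart_power:
  assumes A0: "A $ 0 = 0" and EA: "E = fps_exp 1 oo A" and G0: "\<forall>i. G i 0 = 0"
    and M: "is_divided_difference E (bexp G)" and n: "1 \<le> n"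
    and L: "subst_k E L = fls_X_inv"
  shows "subst_k E (pospart (L ^ n)) =
    fls_X_inv ^ n + fls_const (of_nat n * A $ n) - fps_to_fls (Abs_fps (\<lambda>i. of_nat n * G i n))"
    (is "_ = ?\<beta>")
proof -
  have E0: "E $ 0 = 1" by (simp add: EA)
  have "fls_subdegree L = -1" using fls_subdegree_subst_k[OF E0, of L] L by simp
  then have "fls_subdegree (L ^ n) = - int n" by (simp add: fls_subdegree_pow)
  then have "pospart (L ^ n) = (\<Sum>j=1..n. fls_const ((L ^ n) $$ (- int j)) * fls_X_inv ^ j)"
    by (intro pospart_eq_sum) auto
  then have C: "subst_k E (pospart (L ^ n)) = (\<Sum>j=1..n. fls_const ((L ^ n) $$ (- int j)) * kser E ^ j)"
    using E0 by (simp add: subst_k_sum subst_k_mult subst_k_const subst_k_power subst_k_X_inv)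
  define d where "d j = of_nat n / of_nat j * (kinv E ^ j) $ n" for j
  have \<beta>: "?\<beta> = (\<Sum>j=1..n. fls_const (d j) * kser E ^ j)"
    unfolding d_def by (rule lagrange_kser_expansion[OF A0 EA G0 M n])
  have "fls_is_fps (subst_k E (L ^ n - pospart (L ^ n)))"
    by (intro fls_is_fps_subst_k[OF E0]) (simp add: fls_is_fps_def pospart_nth)
  moreover have "fls_is_fps (fls_X_inv ^ n - ?\<beta>)" by (simp add: fls_is_fps_def)
  ultimately have "fls_is_fps ((fls_X_inv ^ n - ?\<beta>) - subst_k E (L ^ n - pospart (L ^ n)))"
    by (simp add: fls_is_fps_def)
  also have "(fls_X_inv ^ n - ?\<beta>) - subst_k E (L ^ n - pospart (L ^ n)) =
             (\<Sum>j=1..n. fls_const ((L ^ n) $$ (- int j) - d j) * kser E ^ j)"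
    using E0 unfolding \<beta> by (simp add: subst_k_diff subst_k_power L C fls_minus_const[symmetric]
        left_diff_distrib sum_subtractf)
  finally have "\<forall>j\<in>{1..n}. (L ^ n) $$ (- int j) - d j = 0"
    by (rule kser_polynomial_eq_0[OF E0])
  then show ?thesis unfolding C \<beta> by (intro sum.cong refl) auto
qed

section \<open>The chain rule for \<open>f(k(z))\<close>\<close>

lemma fls_X_inv_power_mult_fps_nth:
  "(fls_X_inv ^ K * fps_to_fls F) $$ m = (if m + int K < 0 then 0 else F $ nat (m + int K))"
  by (simp add: fls_X_inv_power_times_conv_shift)

lemma fls_eq_X_inv_power_mult:
  assumes "\<forall>m < - int K. f $$ m = 0"
  shows "f = fls_X_inv ^ K * fps_to_fls (Abs_fps (\<lambda>n. f $$ (int n - int K)))"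
  using assms by (auto simp: fls_eq_iff fls_X_inv_power_mult_fps_nth)

lemma has_fls_deriv_X_inv_power_mult_iff:
  "has_fls_deriv (\<lambda>h. fls_X_inv ^ K * fps_to_fls (T h)) (fls_X_inv ^ K * fps_to_fls T') t \<longleftrightarrow>
   has_fps_deriv T T' t"
  unfolding has_fls_deriv_def has_fps_deriv_def fls_X_inv_power_mult_fps_nth
proof safe
  fix n
  assume "\<forall>m. ((\<lambda>h. if m + int K < 0 then 0 else T h $ nat (m + int K)) has_real_derivative
             (if m + int K < 0 then 0 else T' $ nat (m + int K))) (at t)"
  from spec[OF this, of "int n - int K"]
  show "((\<lambda>h. T h $ n) has_real_derivative T' $ n) (at t)" by simp
qed auto

lemma kderiv_nth: "kderiv f $$ m = of_int (1 - m) * f $$ (m - 1)"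
  unfolding kderiv_def
  by (rule nth_Abs_fls_ex_lower_bound) (auto intro: exI[of _ "fls_subdegree f + 1"])

lemma kderiv_X_inv_power_mult:
  "kderiv (fls_X_inv ^ K * fps_to_fls F) =
     of_nat K * fls_X * (fls_X_inv ^ K * fps_to_fls F) - fls_X\<^sup>2 * (fls_X_inv ^ K * fps_to_fls (fps_deriv F))"
proof (rule fls_eqI)
  fix m :: int
  have a: "(of_nat K * fls_X * y) $$ n = of_nat K * y $$ (n - 1)" for y :: "real fls" and n
  proof -
    have "of_nat K * fls_X * y = fls_const (real K) * (fls_X * y)" by (simp add: fls_of_nat mult.assoc)
    then show ?thesis by (simp only: fls_mult_const_nth) (simp add: fls_X_times_conv_shift)
  qed
  have b: "(fls_X\<^sup>2 * y) $$ n = y $$ (n - 2)" for y :: "real fls" and n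
    by (simp add: fls_X_power_times_conv_shift)
  show "kderiv (fls_X_inv ^ K * fps_to_fls F) $$ m =
        (of_nat K * fls_X * (fls_X_inv ^ K * fps_to_fls F) -
         fls_X\<^sup>2 * (fls_X_inv ^ K * fps_to_fls (fps_deriv F))) $$ m"
  proof (cases "m - 1 + int K < 0")
    case False
    define j where "j = nat (m - 1 + int K)"
    have mj: "m = int j + 1 - int K" using False by (simp add: j_def)
    show ?thesis
    proof (cases j)
      case (Suc i)
      have "nat (int (Suc i) + 1 - int K - 2 + int K) = i" by simp
      then show ?thesis
        by (simp add: kderiv_nth a b fls_X_inv_power_mult_fps_nth mj Suc del: of_nat_Suc)
           (simp add: algebra_simps)
    qed (simp add: kderiv_nth a b fls_X_inv_power_mult_fps_nth mj)
  qed (simp add: kderiv_nth a b fls_X_inv_power_mult_fps_nth)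
qed

lemma has_fls_deriv_kser: "has_fps_deriv E E' t \<Longrightarrow> has_fls_deriv (\<lambda>h. kser (E h)) (kser E') t"
  using has_fls_deriv_X_inv_power_mult_iff[of 1] by (simp add: kser_def)

lemma has_fps_deriv_kinv:
  assumes E0: "\<forall>h. E h $ 0 = 1" and dE: "has_fps_deriv E E' t"
  shows "has_fps_deriv (\<lambda>h. kinv (E h)) (- kinv (E t) * inverse (E t) * E') t"
  using has_fps_deriv_mult[OF has_fps_deriv_const has_fps_deriv_inverse[OF dE E0], of fps_X]
  by (simp add: kinv_def[abs_def] power2_eq_square algebra_simps)

lemma fps_power_eq_inverse_mult_power_Suc:
  fixes E :: "'a::field fps"
  shows "E $ 0 \<noteq> 0 \<Longrightarrow> E ^ n = inverse E * E ^ Suc n"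
  by (simp add: inverse_mult_eq_1 mult.assoc[symmetric])

text \<open>For \<open>f = k\<^sup>K F(1/k)\<close>, \<open>E\<^sup>K (F \<circ> kinv E)\<close> is \<open>z\<^sup>-\<^sup>K f(k(z))\<close>.\<close>
lemma has_fps_deriv_subst_k_power_mult:
  assumes E0: "\<forall>h. E h $ 0 = 1" and dE: "has_fps_deriv E E' t" and dF: "has_fps_deriv F F' t"
  shows "has_fps_deriv (\<lambda>h. E h ^ K * (F h oo kinv (E h)))
           (E t ^ K * (F' oo kinv (E t)) + inverse (E t) * E' *
             (of_nat K * E t ^ K * (F t oo kinv (E t)) -
              kinv (E t) * E t ^ K * (fps_deriv (F t) oo kinv (E t)))) t"
proof -
  have "has_fps_deriv (\<lambda>h. F h oo kinv (E h))
          ((F' oo kinv (E t)) + (fps_deriv (F t) oo kinv (E t)) * (- kinv (E t) * inverse (E t) * E')) t"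
    using E0 by (intro has_fps_deriv_compose[OF dF has_fps_deriv_kinv[OF E0 dE]]) (simp add: kinv_nth_0)
  note D = has_fps_deriv_mult[OF has_fps_deriv_power[OF dE, of K] this]
  have pw: "of_nat K * E t ^ (K - 1) = of_nat K * (inverse (E t) * E t ^ K)"
    using fps_power_eq_inverse_mult_power_Suc[of "E t" "K - 1"] E0 by (cases K) simp_all
  show ?thesis using D unfolding pw by (simp add: algebra_simps)
qed

lemma subst_k_kderiv_mult_kser:
  assumes E0: "E $ 0 = 1"
  shows "subst_k E (kderiv (fls_X_inv ^ K * fps_to_fls F)) * kser E' =
         fls_X_inv ^ K * fps_to_fls (inverse E * E' *
           (of_nat K * E ^ K * (F oo kinv E) - kinv E * E ^ K * (fps_deriv F oo kinv E)))"
proof -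
  define G where "G = fps_to_fls (kinv E)"
  have "G * fls_X_inv = (fls_X * fls_X_inv) * fps_to_fls (inverse E)"
    by (simp add: G_def kinv_def fls_times_fps_to_fls ac_simps)
  then have GX: "G * fls_X_inv = fps_to_fls (inverse E)"
    by (simp add: fls_X_mult_X_inv)
  have "subst_k E (kderiv (fls_X_inv ^ K * fps_to_fls F)) =
        of_nat K * G * (fls_X_inv ^ K * fps_to_fls (E ^ K * (F oo kinv E))) -
        G\<^sup>2 * (fls_X_inv ^ K * fps_to_fls (E ^ K * (fps_deriv F oo kinv E)))"
  proof -
    have "subst_k E (of_nat K * fls_X) = of_nat K * G"
      using E0 by (simp add: subst_k_mult subst_k_X fls_of_nat subst_k_const G_def)
    moreover have "subst_k E (fls_X\<^sup>2) = G\<^sup>2"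
      using E0 by (simp add: subst_k_power subst_k_X G_def)
    ultimately show ?thesis
      unfolding kderiv_X_inv_power_mult subst_k_diff[OF E0] subst_k_mult[OF E0, of "of_nat K * fls_X"]
        subst_k_mult[OF E0, of "fls_X\<^sup>2"] subst_k_X_inv_power_mult[OF E0] by simp
  qed
  then have "subst_k E (kderiv (fls_X_inv ^ K * fps_to_fls F)) * kser E' =
      (of_nat K * G * (fls_X_inv ^ K * fps_to_fls (E ^ K * (F oo kinv E))) -
       G\<^sup>2 * (fls_X_inv ^ K * fps_to_fls (E ^ K * (fps_deriv F oo kinv E)))) *
      (fls_X_inv * fps_to_fls E')"
    by (simp add: kser_def)
  also have "\<dots> = fls_X_inv ^ K * (fps_to_fls (inverse E) * fps_to_fls E' *
      (of_nat K * fps_to_fls (E ^ K * (F oo kinv E)) - G * fps_to_fls (E ^ K * (fps_deriv F oo kinv E))))"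
    unfolding GX[symmetric] by (simp add: algebra_simps power2_eq_square)
  finally show ?thesis
    by (simp add: G_def fls_times_fps_to_fls fps_to_fls_of_nat)
qed

lemma has_fls_deriv_X_inv_power_multE:
  assumes "has_fls_deriv (\<lambda>h. fls_X_inv ^ K * fps_to_fls (W h)) D t"
  obtains W' where "D = fls_X_inv ^ K * fps_to_fls W'" and "has_fps_deriv W W' t"
proof
  have "D $$ m = 0" if "m < - int K" for m
  proof -
    have "((\<lambda>h. 0) has_real_derivative D $$ m) (at t)"
      using spec[OF assms[unfolded has_fls_deriv_def fls_X_inv_power_mult_fps_nth], of m] that
      by simp
    then show ?thesis using DERIV_const DERIV_unique by blast
  qed
  then show D: "D = fls_X_inv ^ K * fps_to_fls (Abs_fps (\<lambda>n. D $$ (int n - int K)))"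
    by (intro fls_eq_X_inv_power_mult) blast
  show "has_fps_deriv W (Abs_fps (\<lambda>n. D $$ (int n - int K))) t"
    using assms by (subst (asm) D) (simp only: has_fls_deriv_X_inv_power_mult_iff)
qed

lemma fps_differentiable_of_subst_k_power_mult:
  assumes E0: "\<forall>h. E h $ 0 = 1" and dE: "has_fps_deriv E E' t"
    and dW: "has_fps_deriv (\<lambda>h. E h ^ K * (F h oo kinv (E h))) W' t"
  shows "fps_differentiable F t"
proof (rule fps_differentiable_compose_cancel[OF has_fps_deriv_kinv[OF E0 dE]])
  have "fps_differentiable (\<lambda>h. inverse (E h) ^ K * (E h ^ K * (F h oo kinv (E h)))) t"
    by (rule has_fps_deriv_imp_fps_differentiable has_fps_deriv_mult has_fps_deriv_power
        has_fps_deriv_inverse dE E0 dW)+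
  also have "(\<lambda>h. inverse (E h) ^ K * (E h ^ K * (F h oo kinv (E h)))) = (\<lambda>h. F h oo kinv (E h))"
    using E0 by (simp add: mult.assoc[symmetric] inverse_mult_eq_1 flip: power_mult_distrib)
  finally show "fps_differentiable (\<lambda>h. F h oo kinv (E h)) t" .
qed (use E0 kinv_nth_0 kinv_nth_1 in auto)

text \<open>The chain rule for \<open>f(h, k(z; h))\<close>; here \<open>kser E' = \<partial>\<^sub>h k(z)\<close>.\<close>
lemma subst_k_chain_rule:
  assumes E0: "\<forall>h. E h $ 0 = 1" and dE: "has_fps_deriv E E' t"
    and f_below: "\<forall>h m. m < - int K \<longrightarrow> f h $$ m = 0"
    and dC: "has_fls_deriv (\<lambda>h. subst_k (E h) (f h)) D t"
  obtains f' where "has_fls_deriv f f' t"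
    and "subst_k (E t) f' = D - subst_k (E t) (kderiv (f t)) * kser E'"
proof -
  define F where "F h = Abs_fps (\<lambda>n. f h $$ (int n - int K))" for h
  have f_eq: "f = (\<lambda>h. fls_X_inv ^ K * fps_to_fls (F h))"
    unfolding F_def using f_below by (intro ext fls_eq_X_inv_power_mult) blast
  have "has_fls_deriv (\<lambda>h. fls_X_inv ^ K * fps_to_fls (E h ^ K * (F h oo kinv (E h)))) D t"
    using dC E0 by (simp add: f_eq subst_k_X_inv_power_mult)
  then obtain W' where D_eq: "D = fls_X_inv ^ K * fps_to_fls W'"
    and dW: "has_fps_deriv (\<lambda>h. E h ^ K * (F h oo kinv (E h))) W' t"
    by (rule has_fls_deriv_X_inv_power_multE)
  obtain F' where dF: "has_fps_deriv F F' t"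
    using fps_differentiable_of_subst_k_power_mult[OF E0 dE dW] fps_differentiable_has_fps_deriv
    by blast
  show ?thesis
  proof
    show "has_fls_deriv f (fls_X_inv ^ K * fps_to_fls F') t"
      unfolding f_eq has_fls_deriv_X_inv_power_mult_iff by (fact dF)
    have "W' = E t ^ K * (F' oo kinv (E t)) + inverse (E t) * E' *
             (of_nat K * E t ^ K * (F t oo kinv (E t)) -
              kinv (E t) * E t ^ K * (fps_deriv (F t) oo kinv (E t)))"
      using has_fps_deriv_unique[OF dW has_fps_deriv_subst_k_power_mult[OF E0 dE dF]] .
    then show "subst_k (E t) (fls_X_inv ^ K * fps_to_fls F') =
               D - subst_k (E t) (kderiv (f t)) * kser E'"
      using E0 by (simp add: D_eq f_eq subst_k_X_inv_power_mult subst_k_kderiv_mult_kser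
          distrib_left)
  qed
qed

section \<open>The Lax pair built from \<open>\<tau>\<close> and \<open>\<phi>\<^sub>0\<close>\<close>

lemma Eser_nth_0 [simp]: "Eser f x $ 0 = 1"
  by (simp add: Eser_def)

lemma Aser_eq_Dz: "Aser = Dz"
  by (intro ext) (simp add: Aser_def Dz_def)

lemma Hser_eq_Dz: "smooth F \<Longrightarrow> Hser F x = - Dz (pd 0 F) x"
  by (simp add: Hser_def Dz_def fps_eq_iff pd_commute)

lemma subst_kz_eq_subst_k: "subst_kz f phi0 x = subst_k (Eser phi0 x) f"
  using fls_regpart_inverse_kser[OF Eser_nth_0, of phi0 x]
  by (simp only: subst_kz_def subst_k_def kz_def kser_def)

lemma fps_to_fls_kinv_mult_kser: "E $ 0 = 1 \<Longrightarrow> fps_to_fls (kinv E) * kser (E * a) = fps_to_fls a"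
  using kser_mult_kinv[of E] by (simp add: kser_def fls_times_fps_to_fls ac_simps)

lemma is_divided_difference_Eser:
  assumes "\<forall>a b. bilin_lhs phi0 x a b = bilin_rhs F x a b"
  shows "is_divided_difference (Eser phi0 x) (bexp (Gbi F x))"
  unfolding is_divided_difference_def
proof (intro allI)
  fix i j :: nat
  have "bilin_lhs phi0 x (1 - int i) (1 - int j) = bilin_rhs F x (1 - int i) (1 - int j)"
    using assms by blast
  moreover have "bilin_lhs phi0 x (1 - int i) (1 - int j) =
      (if j = 1 then Eser phi0 x $ i else 0) - (if i = 1 then Eser phi0 x $ j else 0)"
    by (auto simp: bilin_lhs_def)
  moreover have "bilin_rhs F x (1 - int i) (1 - int j) =
      (if 1 \<le> j then bexp (Gbi F x) i (j - 1) else 0) - (if 1 \<le> i then bexp (Gbi F x) (i - 1) j else 0)"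
    by (auto simp: bilin_rhs_def bcoeff_def nat_diff_distrib)
  ultimately show "(if j = 1 then Eser phi0 x $ i else 0) - (if i = 1 then Eser phi0 x $ j else 0) =
      (if 1 \<le> j then bexp (Gbi F x) i (j - 1) else 0) - (if 1 \<le> i then bexp (Gbi F x) (i - 1) j else 0)"
    by simp
qed

locale dcmKP_tau_function =
  fixes N :: nat and F phi0 :: "pt \<Rightarrow> real" and L P :: "pt \<Rightarrow> real fls"
  assumes smooth_F: "smooth F"
    and smooth_phi0: "smooth phi0"
    and bilinear: "\<forall>x a b. bilin_lhs phi0 x a b = bilin_rhs F x a b"
    and L_inverse: "\<forall>x. subst_kz (L x) phi0 x = fls_X_inv"
    and P_def: "\<forall>x. subst_kz (P x) phi0 x =
                   fls_const (exp (pd 0 phi0 x)) * fls_X_intpow (- int N)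
                   * fps_to_fls (fps_exp 1 oo Hser F x)"
begin

text \<open>\<open>Bz n = B\<^sub>n(k(z))\<close>, and \<open>flow i j = \<partial>\<^sub>i B\<^sub>j(k(z))\<close> at fixed \<open>z\<close>, where \<open>B\<^sub>0 = log P\<close>
  and \<open>B\<^sub>1 = k\<close>. All equations of the hierarchy reduce to the symmetry of \<open>flow\<close>.\<close>
definition Bz :: "nat \<Rightarrow> pt \<Rightarrow> real fls" where
  "Bz n x = fls_X_inv ^ n + fls_const (pd n phi0 x) - fps_to_fls (Dz (pd n F) x)"

definition flow :: "nat \<Rightarrow> nat \<Rightarrow> pt \<Rightarrow> real fls" where
  "flow i j x = fls_const (pd i (pd j phi0) x) - fps_to_fls (Dz (pd i (pd j F)) x)"

lemma flow_commute: "flow i j x = flow j i x"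
  by (simp add: flow_def pd_commute[OF smooth_phi0, of i j] pd_commute[OF smooth_F, of i j])

lemma has_fls_deriv_Bz: "has_fls_deriv (\<lambda>h. Bz n (x(i := h))) (flow i n x) (x i)"
proof -
  have "has_fps_deriv (\<lambda>h. fps_const (pd n phi0 (x(i := h))) - Dz (pd n F) (x(i := h)))
          (fps_const (pd i (pd n phi0) x) - Dz (pd i (pd n F)) x) (x i)"
    using smooth_has_real_derivative[OF smooth_pd[OF smooth_phi0, of n], of x i "x i"]
    by (intro has_fps_deriv_diff has_fps_deriv_fps_const has_fps_deriv_Dz smooth_pd smooth_F) simp
  from has_fls_deriv_add[OF has_fls_deriv_const has_fls_deriv_fps_to_fls[OF this]]
  show ?thesis by (simp add: Bz_def flow_def add_diff_eq)
qed

lemma subst_L: "subst_k (Eser phi0 x) (L x) = fls_X_inv"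
  using L_inverse by (simp add: subst_kz_eq_subst_k)

lemma fls_subdegree_L: "fls_subdegree (L x) = -1"
  using fls_subdegree_subst_k[OF Eser_nth_0, of phi0 x "L x"] by (simp add: subst_L)

lemma L_power_nth_below: "m < - int n \<Longrightarrow> (L x ^ n) $$ m = 0"
  using fls_subdegree_L[of x] by (simp add: fls_subdegree_pow)

lemma subst_Bn:
  assumes n: "1 \<le> n"
  shows "subst_k (Eser phi0 x) (Bn L n x) = Bz n x"
proof -
  have "subst_k (Eser phi0 x) (pospart (L x ^ n)) =
        fls_X_inv ^ n + fls_const (of_nat n * Aser phi0 x $ n) -
        fps_to_fls (Abs_fps (\<lambda>i. of_nat n * Gbi F x i n))"
    by (rule subst_k_pospart_power[OF _ _ _ is_divided_difference_Eser n subst_L])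
       (use bilinear in \<open>simp_all add: Eser_def Aser_def Gbi_def\<close>)
  also have "of_nat n * Aser phi0 x $ n = pd n phi0 x" using n by (simp add: Aser_def)
  also have "Abs_fps (\<lambda>i. of_nat n * Gbi F x i n) = Dz (pd n F) x"
    using n by (auto simp: Gbi_def Dz_def fps_eq_iff)
  finally show ?thesis by (simp add: Bn_def Bz_def)
qed

lemma pospart_L: "pospart (L x) = fls_X_inv"
proof -
  have pp: "pospart (L x) = fls_const (L x $$ (-1)) * fls_X_inv"
    using pospart_eq_sum[of 1 "L x"] L_power_nth_below[of _ 1 x] by simp
  have "fls_const (L x $$ (-1)) * kser (Eser phi0 x) = Bz 1 x"
    using subst_Bn[of 1 x] pp
    by (simp add: Bn_def subst_k_mult subst_k_const subst_k_X_inv)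
  then have "(fls_const (L x $$ (-1)) * kser (Eser phi0 x)) $$ (-1) = Bz 1 x $$ (-1)" by simp
  then have "L x $$ (-1) = 1" by (simp add: kser_def fls_X_inv_times_conv_shift Bz_def)
  then show ?thesis using pp by simp
qed

lemma kser_Eser: "kser (Eser phi0 x) = Bz 1 x"
  using subst_Bn[of 1 x] by (simp add: Bn_def pospart_L subst_k_X_inv)

lemma has_fps_deriv_Eser:
  "has_fps_deriv (\<lambda>h. Eser phi0 (x(i := h))) (Eser phi0 x * Dz (pd i phi0) x) (x i)"
  using has_fps_deriv_exp_compose[OF has_fps_deriv_Dz[OF smooth_phi0, of x i]]
  by (simp add: Eser_def[abs_def] Aser_eq_Dz)

lemma kser_deriv_Eser: "kser (Eser phi0 x * Dz (pd i phi0) x) = flow i 1 x"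
  by (rule has_fls_deriv_unique[OF has_fls_deriv_kser[OF has_fps_deriv_Eser, unfolded kser_Eser]
        has_fls_deriv_Bz])

lemma subst_pdS:
  assumes below: "\<forall>y m. m < - int K \<longrightarrow> S y $$ m = 0"
    and dC: "has_fls_deriv (\<lambda>h. subst_k (Eser phi0 (x(i := h))) (S (x(i := h)))) D (x i)"
  shows "subst_k (Eser phi0 x) (pdS i S x) = D - subst_k (Eser phi0 x) (kderiv (S x)) * flow i 1 x"
    and "(\<lambda>h. S (x(i := h)) $$ m) differentiable (at (x i))"
proof -
  obtain S' where dS: "has_fls_deriv (\<lambda>h. S (x(i := h))) S' (x i)"
    and C: "subst_k (Eser phi0 (x(i := x i))) S' =
            D - subst_k (Eser phi0 (x(i := x i))) (kderiv (S (x(i := x i)))) *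
            kser (Eser phi0 x * Dz (pd i phi0) x)"
    by (rule subst_k_chain_rule[OF _ has_fps_deriv_Eser _ dC]) (use below in auto)
  show "subst_k (Eser phi0 x) (pdS i S x) = D - subst_k (Eser phi0 x) (kderiv (S x)) * flow i 1 x"
    using C by (simp add: has_fls_deriv_pdS[OF dS] kser_deriv_Eser)
  show "(\<lambda>h. S (x(i := h)) $$ m) differentiable (at (x i))"
    by (rule has_fls_deriv_differentiable[OF dS])
qed

lemma subst_pdS_L: "subst_k (Eser phi0 x) (pdS i L x) = - subst_k (Eser phi0 x) (kderiv (L x)) * flow i 1 x"
  and L_differentiable: "(\<lambda>h. L (x(i := h)) $$ m) differentiable (at (x i))"
  using subst_pdS[of 1 L x i 0] L_power_nth_below[of _ 1] has_fls_deriv_const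
  by (simp_all add: subst_L)

lemma subst_pdS_Bn:
  assumes n: "1 \<le> n"
  shows "subst_k (Eser phi0 x) (pdS i (Bn L n) x) =
         flow i n x - subst_k (Eser phi0 x) (kderiv (Bn L n x)) * flow i 1 x"
proof (rule subst_pdS(1))
  show "\<forall>y m. m < - int n \<longrightarrow> Bn L n y $$ m = 0"
    by (simp add: Bn_def pospart_nth L_power_nth_below)
  show "has_fls_deriv (\<lambda>h. subst_k (Eser phi0 (x(i := h))) (Bn L n (x(i := h)))) (flow i n x) (x i)"
    using has_fls_deriv_Bz by (simp add: subst_Bn[OF n])
qed

lemma subst_P:
  "subst_k (Eser phi0 x) (P x) =
   fls_X_inv ^ N * fps_to_fls (fps_const (exp (pd 0 phi0 x)) * (fps_exp 1 oo Hser F x))"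
proof -
  have "fls_X_intpow (- int N) = (fls_X_inv ^ N :: real fls)"
    using fls_X_inv_power_times_conv_shift(1)[of N "1 :: real fls"] by simp
  then show ?thesis
    using P_def by (simp add: subst_kz_eq_subst_k fls_times_fps_to_fls ac_simps)
qed

lemma P_nth_below: "m < - int N \<Longrightarrow> P x $$ m = 0"
proof -
  have "fls_subdegree (subst_k (Eser phi0 x) (P x)) = - int N"
    unfolding subst_P by (rule fls_subdegree_eqI) (simp_all add: fls_X_inv_power_mult_fps_nth)
  then show "m < - int N \<Longrightarrow> P x $$ m = 0" by (simp add: fls_subdegree_subst_k)
qed

definition P_fps :: "pt \<Rightarrow> real fps" where
  "P_fps x = Abs_fps (\<lambda>n. P x $$ (int n - int N))"

lemma P_eq: "P x = fls_X_inv ^ N * fps_to_fls (P_fps x)"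
  unfolding P_fps_def by (rule fls_eq_X_inv_power_mult) (use P_nth_below in blast)

lemma subst_P_fps:
  "Eser phi0 x ^ N * (P_fps x oo kinv (Eser phi0 x)) =
   fps_const (exp (pd 0 phi0 x)) * (fps_exp 1 oo Hser F x)"
  using subst_P[of x] by (simp add: P_eq[of x] subst_k_X_inv_power_mult)

lemma P_nth_lead: "P x $$ (- int N) = exp (pd 0 phi0 x)"
proof -
  have "P x $$ (- int N) = (Eser phi0 x ^ N * (P_fps x oo kinv (Eser phi0 x))) $ 0"
    by (simp add: P_fps_def fps_power_zeroth)
  then show ?thesis by (simp add: subst_P_fps)
qed

lemma logP_const_eq: "logP_const N P = pd 0 phi0"
  by (rule ext) (simp add: logP_const_def P_nth_lead)

text \<open>At \<open>k = k(z)\<close>, \<open>log (P/(p\<^sub>0 k\<^sup>N)) = N log (z/k(z)) + H = H - N A\<close>, as \<open>k(z) = z exp A\<close>.\<close>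
lemma subst_logP_ser:
  "subst_k (Eser phi0 x) (logP_ser N P x) = fps_to_fls (Hser F x - fps_const (of_nat N) * Aser phi0 x)"
proof -
  define E where "E = Eser phi0 x"
  define A where "A = Aser phi0 x"
  define H where "H = Hser F x"
  define p0 where "p0 = exp (pd 0 phi0 x)"
  define Q where "Q = fps_const (1 / p0) * P_fps x - 1"
  have A0: "A $ 0 = 0" and H0: "H $ 0 = 0" and p0: "p0 \<noteq> 0"
    by (simp_all add: A_def Aser_def H_def Hser_def p0_def)
  have Q0: "Q $ 0 = 0"
    using P_nth_lead[of x] p0 by (simp add: Q_def P_fps_def p0_def)
  have "Abs_fps (\<lambda>n. P x $$ (int n - int N) / P x $$ (- int N)) = fps_const (1 / p0) * P_fps x"
    by (simp add: fps_eq_iff P_nth_lead P_fps_def p0_def)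
  then have "logP_ser N P x = fps_to_fls (fps_ln 1 oo Q)"
    by (simp add: logP_ser_def Q_def)
  then have "subst_k E (logP_ser N P x) = fps_to_fls (fps_ln 1 oo (Q oo kinv E))"
    by (simp add: E_def subst_k_fps_to_fls fps_compose_assoc[OF kinv_nth_0 Q0] kinv_nth_0)
  also have "Q oo kinv E = inverse E ^ N * (fps_exp 1 oo H) - 1"
  proof -
    have "inverse E ^ N * E ^ N = 1"
      by (simp add: E_def inverse_mult_eq_1 flip: power_mult_distrib)
    then have "P_fps x oo kinv E = inverse E ^ N * (fps_const p0 * (fps_exp 1 oo H))"
      by (metis E_def H_def p0_def subst_P_fps mult.assoc mult_1)
    then show ?thesis
      using p0 by (simp add: Q_def E_def kinv_nth_0 fps_compose_sub_distrib
          fps_compose_mult_distrib ac_simps flip: fps_const_mult)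
  qed
  also have "inverse E ^ N * (fps_exp 1 oo H) = fps_exp 1 oo (H - fps_const (of_nat N) * A)"
  proof -
    have "inverse E ^ N = fps_exp 1 oo (of_nat N * - A)"
      using A0 by (simp add: E_def A_def Eser_def fps_exp_compose_power flip: fps_exp_compose_minus)
    moreover have "fps_exp 1 oo (of_nat N * - A + H) = (fps_exp 1 oo (of_nat N * - A)) * (fps_exp 1 oo H)"
      by (rule fps_exp_compose_add) (use A0 H0 in simp_all)
    ultimately show ?thesis by (simp add: algebra_simps flip: fps_of_nat)
  qed
  also have "fps_ln 1 oo ((fps_exp 1 oo (H - fps_const (of_nat N) * A)) - 1) =
             H - fps_const (of_nat N) * A"
    using A0 H0 by (intro fps_ln_compose_exp_compose) simp
  finally show ?thesis by (simp add: E_def H_def A_def)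
qed

lemma subst_logP_d:
  "subst_k (Eser phi0 x) (logP_d N P i x) =
   flow i 0 x - subst_k (Eser phi0 x) (logP_dk N P x) * flow i 1 x"
proof -
  let ?E = "Eser phi0 x" and ?a = "Dz (pd i phi0) x"
  have "has_fps_deriv (\<lambda>h. Hser F (x(i := h)) - fps_const (of_nat N) * Aser phi0 (x(i := h)))
          (- Dz (pd i (pd 0 F)) x - fps_const (of_nat N) * ?a) (x i)"
    using has_fps_deriv_mult[OF has_fps_deriv_const has_fps_deriv_Dz[OF smooth_phi0]]
    by (simp add: Hser_eq_Dz[OF smooth_F] Aser_eq_Dz has_fps_deriv_diff has_fps_deriv_minus
        has_fps_deriv_Dz smooth_pd smooth_F)
  then have "has_fls_deriv (\<lambda>h. subst_k (Eser phi0 (x(i := h))) (logP_ser N P (x(i := h))))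
               (fps_to_fls (- Dz (pd i (pd 0 F)) x - fps_const (of_nat N) * ?a)) (x i)"
    unfolding subst_logP_ser by (rule has_fls_deriv_fps_to_fls)
  then have "subst_k ?E (pdS i (logP_ser N P) x) =
        fps_to_fls (- Dz (pd i (pd 0 F)) x - fps_const (of_nat N) * ?a) -
        subst_k ?E (kderiv (logP_ser N P x)) * flow i 1 x"
    by (rule subst_pdS(1)[of 0, rotated]) (simp add: logP_ser_def)
  moreover have "fps_to_fls (kinv ?E) * flow i 1 x = fps_to_fls ?a"
    using fps_to_fls_kinv_mult_kser[of ?E ?a] by (simp add: kser_deriv_Eser)
  ultimately show ?thesis
    by (simp add: logP_d_def logP_dk_def logP_const_eq flow_def subst_k_add subst_k_mult subst_k_const
        subst_k_X fls_times_fps_to_fls algebra_simps)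
qed

lemma P_differentiable: "(\<lambda>h. P (x(i := h)) $$ m) differentiable (at (x i))"
proof -
  have de: "((\<lambda>h. exp (pd 0 phi0 (x(i := h)))) has_real_derivative
             exp (pd 0 phi0 x) * pd i (pd 0 phi0) x) (at (x i))"
    using smooth_has_real_derivative[OF smooth_pd[OF smooth_phi0, of 0], of x i "x i"]
    by (auto intro!: derivative_eq_intros)
  have dH: "has_fps_deriv (\<lambda>h. Hser F (x(i := h))) (- Dz (pd i (pd 0 F)) x) (x i)"
    using has_fps_deriv_minus[OF has_fps_deriv_Dz[OF smooth_pd[OF smooth_F, of 0]]]
    by (simp add: Hser_eq_Dz[OF smooth_F])
  obtain W' where "has_fps_deriv (\<lambda>h. fps_const (exp (pd 0 phi0 (x(i := h)))) *
                                     (fps_exp 1 oo Hser F (x(i := h)))) W' (x i)"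
    using has_fps_deriv_mult[OF has_fps_deriv_fps_const[OF de] has_fps_deriv_exp_compose[OF dH]]
    by (auto simp: Hser_def)
  then show ?thesis
    using subst_pdS(2)[of N P x i "fls_X_inv ^ N * fps_to_fls W'"] P_nth_below
    by (simp add: subst_P has_fls_deriv_X_inv_power_mult_iff)
qed

theorem hierarchy: "dcmKP N L P"
  unfolding dcmKP_def
proof (intro conjI allI impI)
  fix x
  show "L x $$ (-1) = 1"
    using arg_cong[OF pospart_L[of x], of "\<lambda>f. f $$ (-1)"] by (simp add: pospart_nth)
  fix m :: int
  assume "m < -1"
  then show "L x $$ m = 0" using L_power_nth_below[of m 1 x] by simp
next
  fix x
  show "P x $$ (- int N) \<noteq> 0" by (simp add: P_nth_lead)
  fix m :: int
  assume "m < - int N"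
  then show "P x $$ m = 0" by (rule P_nth_below)
next
  fix m i x
  show "(\<lambda>h. L (x(i := h)) $$ m) differentiable (at (x i))" by (rule L_differentiable)
  show "(\<lambda>h. P (x(i := h)) $$ m) differentiable (at (x i))" by (rule P_differentiable)
next
  fix n :: nat and x
  assume n: "1 \<le> n"
  show "pdS n L x = pbr (Bn L n) L x"
    by (rule subst_k_inj[OF Eser_nth_0[of phi0 x]])
       (simp only: pbr_def subst_k_diff[OF Eser_nth_0] subst_k_mult[OF Eser_nth_0] subst_pdS_L
         subst_pdS_Bn[OF n] flow_commute[of 1 n x], simp add: algebra_simps)
next
  fix x
  show "pdS 0 L x = pbr_log N P L x"
    by (rule subst_k_inj[OF Eser_nth_0[of phi0 x]])
       (simp only: pbr_log_def subst_k_diff[OF Eser_nth_0] subst_k_mult[OF Eser_nth_0] subst_pdS_L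
         subst_logP_d flow_commute[of 0 1 x], simp add: algebra_simps)
next
  fix n :: nat and x
  assume n: "1 \<le> n"
  show "logP_d N P n x = pdS 0 (Bn L n) x - pbr_log N P (Bn L n) x"
    by (rule subst_k_inj[OF Eser_nth_0[of phi0 x]])
       (simp only: pbr_log_def subst_k_diff[OF Eser_nth_0] subst_k_mult[OF Eser_nth_0]
         subst_pdS_Bn[OF n] subst_logP_d flow_commute[of 0 n x] flow_commute[of 1 n x]
         flow_commute[of 0 1 x], simp add: algebra_simps)
qed

end

theorem mainTheorem11:
  fixes N :: nat
    and F phi0 :: "pt \<Rightarrow> real"
    and L P :: "pt \<Rightarrow> real fls"
  assumes N_pos: "0 < N"
    and smooth_F: "smooth F"
    and smooth_phi0: "smooth phi0"
    and bilinear: "\<forall>x a b. bilin_lhs phi0 x a b = bilin_rhs F x a b"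
    and L_inverse: "\<forall>x. subst_kz (L x) phi0 x = fls_X_inv"
    and P_def: "\<forall>x. subst_kz (P x) phi0 x =
                   fls_const (exp (pd 0 phi0 x)) * fls_X_intpow (- int N)
                   * fps_to_fls (fps_exp 1 oo Hser F x)"
  shows "dcmKP N L P"
proof -
  interpret dcmKP_tau_function N F phi0 L P
    using smooth_F smooth_phi0 bilinear L_inverse P_def by unfold_locales
  show ?thesis by (rule hierarchy)
qed

end
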